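(* Let $V,W$ satisfy (H1)–(H3) of the context and let $\beta_N>0$ with $\beta_N/(N\log N)\to\infty$. Let $\mu$ be a probability measure on $\mathbb{R}^d$ supported in a box $B=\prod_{i=1}^d[a_i,b_i]$, with density $h$ w.r.t. Lebesgue measure such that $\delta\leq h\leq\delta^{-1}$ on $B$ for some $\delta>0$. Then for every $r>0$, $$\liminf_{N\to\infty}\frac{\log Z_NQ_N(B(\mu,r))}{\beta_N}\geq-I(\mu),$$ where $B(\mu,r)=\{\nu:d_{\mathrm{FM}}(\mu,\nu)<r\}$.
   Context: (H1) $W:\mathbb{R}^d\times\mathbb{R}^d\to(-\infty,+\infty]$ continuous, symmetric, finite off the diagonal, and for each compact $K$, $z\mapsto\sup\{W(x,y):|x-y|\geq|z|,x,y\in K\}$ locally Lebesgue integrable; (H2) $V:\mathbb{R}^d\to\mathbb{R}$ continuous, $V(x)\to\infty$ as $|x|\to\infty$, $\int e^{-V}<\infty$; (H3) $W(x,y)\geq c-\varepsilon_o(V(x)+V(y))$ for some $c\in\mathbb{R}$, $\varepsilon_o\in(0,1)$. $H_N(x)=\frac1N\sum_iV(x_i)+\frac1{N^2}\sum_{i<j}W(x_i,x_j)$, $Z_N=\int e^{-\beta_NH_N}dx$, $P_N\propto e^{-\beta_NH_N}dx$, $Q_N$ the law of $\mu_N=\frac1N\sum_i\delta_{x_i}$ under $P_N$; $I(\mu)=\frac12\iint(V(x)+V(y)+W(x,y))d\mu d\mu$; $d_{\mathrm{FM}}$ the Fortet–Mourier distance $\sup\{\int fd\mu-\int fd\nu:\sup|f|\leq1,\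 f\ 1\text{-Lipschitz}\}$. *)

theory Defs
  imports "HOL-Probability.Probability"
begin

definition empirical :: "nat \<Rightarrow> (nat \<Rightarrow> 'a::euclidean_space) \<Rightarrow> 'a measure" where
  "empirical N x = distr (uniform_count_measure {..<N}) borel x"

definition dFM :: "'a::euclidean_space measure \<Rightarrow> 'a measure \<Rightarrow> real" where
  "dFM \<mu> \<nu> = (SUP f \<in> {f. (\<forall>x. \<bar>f x\<bar> \<le> 1) \<and> 1-lipschitz_on UNIV f}.
                 integral\<^sup>L \<mu> f - integral\<^sup>L \<nu> f)"

text \<open>Energy H_N; W takes values in (-infinity, +infinity], hence ereal.\<close>
definition HN :: "('a \<Rightarrow> real) \<Rightarrow> ('a \<Rightarrow> 'a \<Rightarrow> ereal) \<Rightarrow> nat \<Rightarrow> (nat \<Rightarrow> 'a) \<Rightarrow> ereal" where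
  "HN V W N x = ereal ((\<Sum>i<N. V (x i)) / real N)
      + (\<Sum>i<N. \<Sum>j\<in>{i<..<N}. W (x i) (x j)) / ereal ((real N)\<^sup>2)"

definition boltz :: "real \<Rightarrow> ereal \<Rightarrow> ennreal" where
  "boltz b H = (if H = \<infinity> then 0 else ennreal (exp (- b * real_of_ereal H)))"

definition ZQ :: "(nat \<Rightarrow> real) \<Rightarrow> ('a::euclidean_space \<Rightarrow> real) \<Rightarrow> ('a \<Rightarrow> 'a \<Rightarrow> ereal)
                   \<Rightarrow> nat \<Rightarrow> 'a measure set \<Rightarrow> ennreal" where
  "ZQ \<beta> V W N A = (\<integral>\<^sup>+ x. indicator {x. empirical N x \<in> A} x * boltz (\<beta> N) (HN V W N x)
                      \<partial>(\<Pi>\<^sub>M i\<in>{..<N}. (lborel :: 'a measure)))"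

definition eln :: "ennreal \<Rightarrow> ereal" where
  "eln z = (if z = 0 then - \<infinity> else if z = \<infinity> then \<infinity> else ereal (ln (enn2real z)))"

text \<open>I(mu) = 1/2 double integral of V(x)+V(y)+W(x,y), as (positive part - negative part).\<close>
definition Irate :: "('a::euclidean_space \<Rightarrow> real) \<Rightarrow> ('a \<Rightarrow> 'a \<Rightarrow> ereal) \<Rightarrow> 'a measure \<Rightarrow> ereal" where
  "Irate V W \<mu> =
     (let f = (\<lambda>p. ereal (V (fst p)) + ereal (V (snd p)) + W (fst p) (snd p)) in
      (enn2ereal (\<integral>\<^sup>+ p. e2ennreal (f p) \<partial>(\<mu> \<Otimes>\<^sub>M \<mu>))
       - enn2ereal (\<integral>\<^sup>+ p. e2ennreal (- f p) \<partial>(\<mu> \<Otimes>\<^sub>M \<mu>))) / 2)"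

definition Wsup :: "('a::euclidean_space \<Rightarrow> 'a \<Rightarrow> ereal) \<Rightarrow> 'a set \<Rightarrow> 'a \<Rightarrow> ereal" where
  "Wsup W K z = (SUP p \<in> {(x, y). x \<in> K \<and> y \<in> K \<and> norm (x - y) \<ge> norm z}. W (fst p) (snd p))"

end

theory Submission
  imports Defs
begin

text \<open>
  Partition the box into finitely many Borel cells \<open>C\<^sub>k\<close> of diameter at most \<open>r/4\<close>, let
  \<open>\<nu>\<^sub>k\<close> be \<open>\<mu>\<close> conditioned on \<open>C\<^sub>k\<close>, and assign cells \<open>c\<^sub>N(i)\<close> to the particles so that the
  frequency of each cell tends to its mass \<open>\<mu>(C\<^sub>k)\<close>. Every configuration with \<open>x\<^sub>i \<in> C\<^bsub>c\<^sub>N(i)\<^esub>\<close>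
  has empirical measure within \<open>r\<close> of \<open>\<mu>\<close> for large \<open>N\<close>. On these configurations Lebesgue
  measure dominates \<open>B\<^sup>-\<^sup>N \<Otimes>\<^sub>i \<nu>\<^bsub>c\<^sub>N(i)\<^esub>\<close>, with \<open>B = 1/(\<delta> min\<^sub>k \<mu>(C\<^sub>k))\<close> bounding the densities of
  the \<open>\<nu>\<^sub>k\<close>, and Jensen's inequality bounds the \<open>\<Otimes>\<^sub>i \<nu>\<^bsub>c\<^sub>N(i)\<^esub>\<close>-mean of \<open>exp (-\<beta>\<^sub>N H\<^sub>N)\<close> below by
  \<open>exp (-\<beta>\<^sub>N m\<^sub>N)\<close>, where the mean energy \<open>m\<^sub>N\<close> is an explicit combination of the pair energies
  between cells and tends to \<open>I(\<mu>)\<close>. Hence \<open>log Z\<^sub>N Q\<^sub>N(B(\<mu>,r)) / \<beta>\<^sub>N \<ge> -m\<^sub>N - N log B / \<beta>\<^sub>N\<close>,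
  and \<open>N / \<beta>\<^sub>N \<rightarrow> 0\<close>.
\<close>

lemma indicator_PiE_prod:
  assumes "x \<in> extensional I" "finite I"
  shows "indicator (PiE I A) x = (\<Prod>i\<in>I. indicator (A i) (x i) :: ennreal)"
proof (cases "\<forall>i\<in>I. x i \<in> A i")
  case True
  then have "x \<in> PiE I A" using assms by (auto simp: PiE_def extensional_def)
  then show ?thesis using True by auto
next
  case False
  then obtain i where "i \<in> I" "x i \<notin> A i" by auto
  then have "x \<notin> PiE I A" by auto
  moreover have "(\<Prod>i\<in>I. indicator (A i) (x i) :: ennreal) = 0"
    using \<open>i \<in> I\<close> \<open>x i \<notin> A i\<close> assms(2) by (metis indicator_simps(2) prod_zero)
  ultimately show ?thesis by simp
qed

lemma PiM_density_lborel:
  fixes f :: "'i \<Rightarrow> 'a::euclidean_space \<Rightarrow> ennreal"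
  assumes fm[measurable]: "\<And>i. f i \<in> borel_measurable lborel"
   and fin: "\<And>i. sigma_finite_measure (density lborel (f i))"
   and I: "finite I"
  shows "PiM I (\<lambda>i. density lborel (f i)) = density (PiM I (\<lambda>i. lborel)) (\<lambda>x. \<Prod>i\<in>I. f i (x i))"
proof -
  interpret product_sigma_finite "\<lambda>i. density lborel (f i)"
    unfolding product_sigma_finite_def using fin by auto
  interpret L: product_sigma_finite "\<lambda>i. (lborel::'a measure)"
    unfolding product_sigma_finite_def by (auto intro: lborel.sigma_finite_measure_axioms)
  have sets_eq: "sets (PiM I (\<lambda>i. density lborel (f i))) = sets (PiM I (\<lambda>i. (lborel::'a measure)))"
    by (intro sets_PiM_cong) auto
  show ?thesis
  proof (rule PiM_eqI[symmetric, OF I])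
    show "sets (density (PiM I (\<lambda>i. lborel)) (\<lambda>x. \<Prod>i\<in>I. f i (x i))) = sets (PiM I (\<lambda>i. density lborel (f i)))"
      using sets_eq by simp
    fix A assume A: "\<And>i. i \<in> I \<Longrightarrow> A i \<in> sets (density lborel (f i))"
    have A': "PiE I A \<in> sets (PiM I (\<lambda>i. (lborel::'a measure)))"
      using A by (intro sets_PiM_I_finite I) auto
    have "emeasure (density (PiM I (\<lambda>i. lborel)) (\<lambda>x. \<Prod>i\<in>I. f i (x i))) (PiE I A)
       = (\<integral>\<^sup>+ x. (\<Prod>i\<in>I. f i (x i)) * indicator (PiE I A) x \<partial>PiM I (\<lambda>i. lborel))"
      using A' by (subst emeasure_density) (auto intro!: borel_measurable_prod_ennreal)
    also have "\<dots> = (\<integral>\<^sup>+ x. (\<Prod>i\<in>I. f i (x i) * indicator (A i) (x i)) \<partial>PiM I (\<lambda>i. lborel))"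
    proof (intro nn_integral_cong)
      fix x assume "x \<in> space (PiM I (\<lambda>i. (lborel::'a measure)))"
      then have "x \<in> extensional I" by (simp add: space_PiM PiE_iff)
      then show "(\<Prod>i\<in>I. f i (x i)) * indicator (PiE I A) x = (\<Prod>i\<in>I. f i (x i) * indicator (A i) (x i))"
        by (simp add: indicator_PiE_prod[OF _ I] prod.distrib)
    qed
    also have "\<dots> = (\<Prod>i\<in>I. \<integral>\<^sup>+ y. f i y * indicator (A i) y \<partial>lborel)"
      using A by (intro L.product_nn_integral_prod I) auto
    also have "\<dots> = (\<Prod>i\<in>I. emeasure (density lborel (f i)) (A i))"
      using A by (intro prod.cong refl) (auto simp: emeasure_density)
    finally show "emeasure (density (PiM I (\<lambda>i. lborel)) (\<lambda>x. \<Prod>i\<in>I. f i (x i))) (PiE I A)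
        = (\<Prod>i\<in>I. emeasure (density lborel (f i)) (A i))" .
  qed
qed

lemma distr_PiM_pair:
  assumes M: "\<And>i. i \<in> I \<Longrightarrow> prob_space (M i)" and ij: "i \<in> I" "j \<in> I" "i \<noteq> j"
  shows "distr (PiM I M) (M i \<Otimes>\<^sub>M M j) (\<lambda>x. (x i, x j)) = M i \<Otimes>\<^sub>M M j"
proof (rule pair_measure_eqI[symmetric])
  show "sigma_finite_measure (M i)" "sigma_finite_measure (M j)"
    using M ij by (auto intro: prob_space_imp_sigma_finite)
  show "sets (M i \<Otimes>\<^sub>M M j) = sets (distr (PiM I M) (M i \<Otimes>\<^sub>M M j) (\<lambda>x. (x i, x j)))" by simp
  fix A B assume A: "A \<in> sets (M i)" and B: "B \<in> sets (M j)"
  have meas: "(\<lambda>x. (x i, x j)) \<in> PiM I M \<rightarrow>\<^sub>M M i \<Otimes>\<^sub>M M j"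
    using ij by (intro measurable_Pair) auto
  have "(\<lambda>x. (x i, x j)) -` (A \<times> B) \<inter> space (PiM I M)
        = prod_emb I M {i,j} (PiE {i,j} (\<lambda>l. if l = i then A else B))"
    using ij by (auto simp: prod_emb_def space_PiM PiE_iff)
  then have "emeasure (distr (PiM I M) (M i \<Otimes>\<^sub>M M j) (\<lambda>x. (x i, x j))) (A \<times> B)
      = emeasure (PiM I M) (prod_emb I M {i,j} (PiE {i,j} (\<lambda>l. if l = i then A else B)))"
    using A B meas by (subst emeasure_distr) auto
  also have "\<dots> = (\<Prod>l\<in>{i,j}. emeasure (M l) (if l = i then A else B))"
    using A B ij M by (intro emeasure_PiM_emb) auto
  also have "\<dots> = emeasure (M i) A * emeasure (M j) B"
    using ij by simp
  finally show "emeasure (M i) A * emeasure (M j) B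
      = emeasure (distr (PiM I M) (M i \<Otimes>\<^sub>M M j) (\<lambda>x. (x i, x j))) (A \<times> B)" by simp
qed

section \<open>Jensen's inequality for the Boltzmann weight\<close>

lemma ennreal_integral_le_nn_integral:
  fixes T :: "'b \<Rightarrow> real"
  assumes "integrable P T"
  shows "ennreal (integral\<^sup>L P T) \<le> (\<integral>\<^sup>+ x. ennreal (T x) \<partial>P)"
proof -
  have "integral\<^sup>L P T \<le> enn2real (\<integral>\<^sup>+ x. ennreal (T x) \<partial>P)"
    using real_lebesgue_integral_def[OF assms] by (simp add: enn2real_nonneg)
  then have "ennreal (integral\<^sup>L P T) \<le> ennreal (enn2real (\<integral>\<^sup>+ x. ennreal (T x) \<partial>P))"
    by (rule ennreal_leI)
  also have "\<dots> \<le> (\<integral>\<^sup>+ x. ennreal (T x) \<partial>P)"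
    by (cases "(\<integral>\<^sup>+ x. ennreal (T x) \<partial>P)") auto
  finally show ?thesis .
qed

text \<open>
  Only \<open>Y\<close> needs to be integrable: the tangent line of \<open>exp\<close> at the mean is an integrable
  minorant of \<open>exp (- b Y)\<close>.
\<close>
lemma exp_integral_le_nn_integral_exp:
  fixes Y :: "'b \<Rightarrow> real"
  assumes P: "prob_space P" and Y: "integrable P Y"
  shows "ennreal (exp (- b * integral\<^sup>L P Y)) \<le> (\<integral>\<^sup>+ x. ennreal (exp (- b * Y x)) \<partial>P)"
proof -
  interpret prob_space P by fact
  define m where "m = integral\<^sup>L P Y"
  define T where "T x = exp (- b * m) * (1 - b * (Y x - m))" for x
  have T_le: "T x \<le> exp (- b * Y x)" for x
  proof -
    have "1 - b * (Y x - m) \<le> exp (- b * (Y x - m))"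
      using exp_ge_add_one_self[of "- b * (Y x - m)"] by simp
    then have "T x \<le> exp (- b * m) * exp (- b * (Y x - m))"
      unfolding T_def by (intro mult_left_mono) auto
    also have "\<dots> = exp (- b * Y x)" by (simp add: exp_add[symmetric] algebra_simps)
    finally show ?thesis .
  qed
  have T_int: "integrable P T" unfolding T_def using Y by auto
  have "integral\<^sup>L P T = exp (- b * m)"
    unfolding T_def using Y by (simp add: m_def algebra_simps prob_space)
  then have "ennreal (exp (- b * m)) \<le> (\<integral>\<^sup>+ x. ennreal (T x) \<partial>P)"
    using ennreal_integral_le_nn_integral[OF T_int] by simp
  also have "\<dots> \<le> (\<integral>\<^sup>+ x. ennreal (exp (- b * Y x)) \<partial>P)"
    by (intro nn_integral_mono ennreal_leI T_le)
  finally show ?thesis by (simp add: m_def)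
qed

section \<open>Assigning labels with prescribed frequencies\<close>

definition freq :: "nat \<Rightarrow> (nat \<Rightarrow> 'b) \<Rightarrow> 'b \<Rightarrow> real" where
  "freq N c k = real (card {i. i < N \<and> c i = k}) / real N"

lemma rounded_counts_exist:
  fixes p :: "nat \<Rightarrow> real" and S :: "nat set"
  assumes S: "finite S" "k0 \<in> S" and p: "\<forall>k\<in>S. p k \<ge> 0" "sum p S = 1"
  shows "\<exists>n::nat\<Rightarrow>nat. sum n S = N \<and> (\<forall>k\<in>S. \<bar>real (n k) - real N * p k\<bar> \<le> real (card S))"
proof -
  define R where "R = S - {k0}"
  have R: "finite R" "k0 \<notin> R" "S = insert k0 R" using S by (auto simp: R_def)
  define fl where "fl k = nat \<lfloor>real N * p k\<rfloor>" for k
  have fl_le: "real (fl k) \<le> real N * p k" if "k \<in> S" for k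
    using p that by (simp add: fl_def)
  have fl_ge: "real N * p k - 1 \<le> real (fl k)" if "k \<in> S" for k
    using p that by (simp add: fl_def)
  have sum_fl_le: "real (sum fl R) \<le> real N * (1 - p k0)"
  proof -
    have "real (sum fl R) \<le> (\<Sum>k\<in>R. real N * p k)"
      unfolding of_nat_sum using R fl_le by (intro sum_mono) auto
    also have "\<dots> = real N * (1 - p k0)"
      using p(2) R by (simp add: sum_distrib_left[symmetric])
    finally show ?thesis .
  qed
  have sum_fl_ge: "real N * (1 - p k0) - real (card R) \<le> real (sum fl R)"
  proof -
    have "(\<Sum>k\<in>R. real N * p k - 1) \<le> (\<Sum>k\<in>R. real (fl k))"
      using R fl_ge by (intro sum_mono) auto
    moreover have "(\<Sum>k\<in>R. real N * p k - 1) = real N * (1 - p k0) - real (card R)"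
      using p(2) R by (simp add: sum_subtractf sum_distrib_left[symmetric])
    ultimately show ?thesis by (simp add: of_nat_sum)
  qed
  have "p k0 \<le> sum p S" using S p by (intro member_le_sum) auto
  then have "p k0 \<le> 1" using p by simp
  then have sum_fl_le_N: "sum fl R \<le> N"
    using sum_fl_le p S by (smt (verit, best) mult_left_le of_nat_0_le_iff of_nat_le_iff)
  define n where "n k = (if k = k0 then N - sum fl R else fl k)" for k
  have "sum n S = n k0 + sum n R" using R by simp
  also have "sum n R = sum fl R" using R by (intro sum.cong) (auto simp: n_def)
  finally have sum_n: "sum n S = N" using sum_fl_le_N by (simp add: n_def)
  have card_S: "card S = Suc (card R)" using R by simp
  have "\<bar>real (n k) - real N * p k\<bar> \<le> real (card S)" if k: "k \<in> S" for k
  proof (cases "k = k0")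
    case True
    then have "real (n k) = real N - real (sum fl R)" using sum_fl_le_N by (simp add: n_def of_nat_diff)
    then show ?thesis using sum_fl_le sum_fl_ge True card_S by (simp add: algebra_simps)
  next
    case False
    then show ?thesis using fl_le[OF k] fl_ge[OF k] card_S by (simp add: n_def)
  qed
  then show ?thesis using sum_n by blast
qed

lemma assignment_with_counts:
  fixes n :: "nat \<Rightarrow> nat" and S :: "nat set"
  assumes S: "finite S" "k0 \<in> S" and sum_n: "sum n S = N"
  shows "\<exists>c::nat\<Rightarrow>nat. (\<forall>i. c i \<in> S) \<and> (\<forall>k\<in>S. card {i. i < N \<and> c i = k} = n k)"
proof -
  define T where "T = Sigma S (\<lambda>k. {..<n k})"
  have "card T = N" using S sum_n by (simp add: T_def card_SigmaI)
  moreover have "finite T" using S by (simp add: T_def)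
  ultimately obtain g where g: "bij_betw g {..<N} T"
    by (metis card_lessThan finite_lessThan finite_same_card_bij)
  define c where "c i = (if i < N then fst (g i) else k0)" for i
  have gT: "g i \<in> T" if "i < N" for i using bij_betw_apply[OF g] that by auto
  have c_in_S: "c i \<in> S" for i
    using gT[of i] S by (cases "i < N") (auto simp: c_def T_def)
  have "card {i. i < N \<and> c i = k} = n k" if k: "k \<in> S" for k
  proof -
    have "{i. i < N \<and> c i = k} = {i\<in>{..<N}. g i \<in> {k} \<times> {..<n k}}"
    proof (intro set_eqI iffI)
      fix i assume "i \<in> {i. i < N \<and> c i = k}"
      then have "i < N" "fst (g i) = k" by (auto simp: c_def)
      moreover obtain u v where "g i = (u, v)" by force
      ultimately show "i \<in> {i\<in>{..<N}. g i \<in> {k} \<times> {..<n k}}" using gT[of i] by (auto simp: T_def)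
    qed (auto simp: c_def)
    moreover have "bij_betw g {i\<in>{..<N}. g i \<in> {k} \<times> {..<n k}} ({k} \<times> {..<n k})"
    proof (rule bij_betw_subset)
      show "bij_betw g {..<N} T" by (rule g)
      show "{i\<in>{..<N}. g i \<in> {k} \<times> {..<n k}} \<subseteq> {..<N}" by auto
      show "g ` {i\<in>{..<N}. g i \<in> {k} \<times> {..<n k}} = {k} \<times> {..<n k}"
      proof
        show "{k} \<times> {..<n k} \<subseteq> g ` {i\<in>{..<N}. g i \<in> {k} \<times> {..<n k}}"
        proof
          fix z assume z: "z \<in> {k} \<times> {..<n k}"
          then have "z \<in> T" using k by (auto simp: T_def)
          then obtain i where "i \<in> {..<N}" "z = g i" using g by (auto simp: bij_betw_def)
          then show "z \<in> g ` {i\<in>{..<N}. g i \<in> {k} \<times> {..<n k}}" using z by auto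
        qed
      qed auto
    qed
    ultimately show ?thesis by (simp add: bij_betw_same_card)
  qed
  then show ?thesis using c_in_S by blast
qed

lemma assignments_with_frequencies:
  fixes p :: "nat \<Rightarrow> real" and S :: "nat set"
  assumes S: "finite S" "k0 \<in> S" and p: "\<forall>k\<in>S. p k \<ge> 0" "sum p S = 1"
  obtains c :: "nat \<Rightarrow> nat \<Rightarrow> nat"
  where "\<And>N i. c N i \<in> S" "\<And>k. k \<in> S \<Longrightarrow> ((\<lambda>N. freq N (c N) k) \<longlongrightarrow> p k) sequentially"
proof -
  have "\<forall>N. \<exists>c::nat\<Rightarrow>nat. (\<forall>i. c i \<in> S) \<and>
      (\<forall>k\<in>S. \<bar>real (card {i. i < N \<and> c i = k}) - real N * p k\<bar> \<le> real (card S))"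
  proof
    fix N
    obtain n where n: "sum n S = N" "\<forall>k\<in>S. \<bar>real (n k) - real N * p k\<bar> \<le> real (card S)"
      using rounded_counts_exist[OF S p] by blast
    obtain c where "\<forall>i. c i \<in> S" "\<forall>k\<in>S. card {i. i < N \<and> c i = k} = n k"
      using assignment_with_counts[OF S n(1)] by blast
    then show "\<exists>c::nat\<Rightarrow>nat. (\<forall>i. c i \<in> S) \<and>
        (\<forall>k\<in>S. \<bar>real (card {i. i < N \<and> c i = k}) - real N * p k\<bar> \<le> real (card S))"
      using n(2) by (intro exI[of _ c]) simp
  qed
  then obtain c where c: "\<And>N. (\<forall>i. c N i \<in> S)"
    "\<And>N k. k \<in> S \<Longrightarrow> \<bar>real (card {i. i < N \<and> c N i = k}) - real N * p k\<bar> \<le> real (card S)"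
    by metis
  have conv: "((\<lambda>N. freq N (c N) k) \<longlongrightarrow> p k) sequentially" if k: "k \<in> S" for k
  proof -
    have "\<bar>freq N (c N) k - p k\<bar> \<le> real (card S) / real N" if "N > 0" for N
    proof -
      have "freq N (c N) k - p k = (real (card {i. i < N \<and> c N i = k}) - real N * p k) / real N"
        using that by (simp add: freq_def field_simps)
      then show ?thesis
        using c(2)[OF k, of N] by (simp add: abs_divide divide_right_mono)
    qed
    then have "\<forall>\<^sub>F N in sequentially. norm (freq N (c N) k - p k) \<le> real (card S) / real N"
      by (auto intro: eventually_mono[OF eventually_gt_at_top[of 0]])
    moreover have "((\<lambda>N. real (card S) / real N) \<longlongrightarrow> 0) sequentially"
      by (intro tendsto_divide_0[OF tendsto_const] filterlim_at_top_imp_at_infinity filterlim_real_sequentially)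
    ultimately have "((\<lambda>N. freq N (c N) k - p k) \<longlongrightarrow> 0) sequentially"
      by (rule Lim_null_comparison)
    then show ?thesis by (simp add: LIM_zero_iff)
  qed
  show ?thesis by (rule that[of c]) (use c(1) conv in auto)
qed

lemma sum_by_label:
  fixes c :: "nat \<Rightarrow> nat" and S :: "nat set" and F :: "nat \<Rightarrow> real"
  assumes S: "finite S" and c: "\<And>i. c i \<in> S"
  shows "(\<Sum>i<N. F (c i)) = (\<Sum>k\<in>S. real (card {i. i < N \<and> c i = k}) * F k)"
proof -
  have "(\<Sum>i<N. F (c i)) = (\<Sum>k\<in>S. \<Sum>i\<in>{i\<in>{..<N}. c i = k}. F (c i))"
    using c S by (intro sum.group[symmetric]) auto
  also have "\<dots> = (\<Sum>k\<in>S. real (card {i. i < N \<and> c i = k}) * F k)"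
  proof (intro sum.cong refl)
    fix k assume "k \<in> S"
    have "(\<Sum>i\<in>{i\<in>{..<N}. c i = k}. F (c i)) = (\<Sum>i\<in>{i\<in>{..<N}. c i = k}. F k)"
      by (intro sum.cong) auto
    then show "(\<Sum>i\<in>{i\<in>{..<N}. c i = k}. F (c i)) = real (card {i. i < N \<and> c i = k}) * F k"
      by simp
  qed
  finally show ?thesis .
qed

lemma sum_upper_pairs_add:
  fixes A :: "nat \<Rightarrow> real"
  shows "(\<Sum>i<N. \<Sum>j\<in>{i<..<N}. A i + A j) = (real N - 1) * (\<Sum>i<N. A i)"
proof (induction N)
  case 0 then show ?case by simp
next
  case (Suc N)
  have ins: "{i<..<Suc N} = insert N {i<..<N}" if "i < N" for i using that by auto
  have "{N<..<Suc N} = {}" by auto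
  then have "(\<Sum>i<Suc N. \<Sum>j\<in>{i<..<Suc N}. A i + A j) = (\<Sum>i<N. \<Sum>j\<in>{i<..<Suc N}. A i + A j)"
    by simp
  also have "\<dots> = (\<Sum>i<N. (\<Sum>j\<in>{i<..<N}. A i + A j) + (A i + A N))"
    by (intro sum.cong refl) (simp add: ins)
  also have "\<dots> = (real N - 1) * (\<Sum>i<N. A i) + (\<Sum>i<N. A i) + real N * A N"
    using Suc.IH by (simp add: sum.distrib)
  also have "\<dots> = (real (Suc N) - 1) * (\<Sum>i<Suc N. A i)"
    by (simp add: algebra_simps)
  finally show ?case .
qed

lemma sum_upper_pairs_symmetric:
  fixes G :: "nat \<Rightarrow> nat \<Rightarrow> real"
  assumes sym: "\<And>i j. G i j = G j i"
  shows "2 * (\<Sum>i<N. \<Sum>j\<in>{i<..<N}. G i j) = (\<Sum>i<N. \<Sum>j<N. G i j) - (\<Sum>i<N. G i i)"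
proof (induction N)
  case 0 then show ?case by simp
next
  case (Suc N)
  have ins: "{i<..<Suc N} = insert N {i<..<N}" if "i < N" for i using that by auto
  have "{N<..<Suc N} = {}" by auto
  then have "(\<Sum>i<Suc N. \<Sum>j\<in>{i<..<Suc N}. G i j) = (\<Sum>i<N. \<Sum>j\<in>{i<..<Suc N}. G i j)"
    by simp
  also have "\<dots> = (\<Sum>i<N. (\<Sum>j\<in>{i<..<N}. G i j) + G i N)"
    by (intro sum.cong refl) (simp add: ins)
  finally have L: "(\<Sum>i<Suc N. \<Sum>j\<in>{i<..<Suc N}. G i j) = (\<Sum>i<N. \<Sum>j\<in>{i<..<N}. G i j) + (\<Sum>i<N. G i N)"
    by (simp add: sum.distrib)
  have R: "(\<Sum>i<Suc N. \<Sum>j<Suc N. G i j) = (\<Sum>i<N. \<Sum>j<N. G i j) + 2 * (\<Sum>i<N. G i N) + G N N"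
    using sym by (simp add: sum.distrib)
  show ?case using L R Suc.IH by simp
qed

lemma enn2ereal_eq_ereal_enn2real: "x \<noteq> \<top> \<Longrightarrow> enn2ereal x = ereal (enn2real x)"
  by (cases x rule: ennreal_cases) auto

lemma eln_ge_ln_diff:
  assumes a: "0 < a" and b: "0 < b" and le: "ennreal a \<le> ennreal b * Z"
  shows "ereal (ln a - ln b) \<le> eln Z"
proof (cases Z rule: ennreal_cases)
  case (real z)
  have "ennreal a \<le> ennreal (b * z)" using le real b by (simp add: ennreal_mult)
  then have az: "a \<le> b * z" using a b real by (simp add: ennreal_le_iff)
  then have "0 < b * z" using a by linarith
  then have "z > 0" using zero_less_mult_pos b by blast
  have "ln a \<le> ln (b * z)" using az a by simp
  also have "\<dots> = ln b + ln z" using b \<open>z > 0\<close> by (simp add: ln_mult)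
  finally show ?thesis using real \<open>z > 0\<close> by (simp add: eln_def)
next
  case top
  then show ?thesis by (simp add: eln_def)
qed

lemma ereal_divide_pos_mono:
  assumes "ereal t \<le> X" and "\<beta> > 0"
  shows "ereal (t / \<beta>) \<le> X / ereal \<beta>"
  using assms by (cases X) (auto simp: divide_right_mono)

lemma nat_over_beta_tendsto_0:
  fixes \<beta> :: "nat \<Rightarrow> real"
  assumes beta_pos: "\<And>N. \<beta> N > 0"
    and beta_growth: "filterlim (\<lambda>N. \<beta> N / (real N * ln (real N))) at_top sequentially"
  shows "((\<lambda>N. real N / \<beta> N) \<longlongrightarrow> 0) sequentially"
proof -
  have "filterlim (\<lambda>N. \<beta> N / real N) at_top sequentially"
  proof (rule filterlim_at_top_mono[OF beta_growth])
    show "\<forall>\<^sub>F N in sequentially. \<beta> N / (real N * ln (real N)) \<le> \<beta> N / real N"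
      using eventually_ge_at_top[of 3]
    proof eventually_elim
      case (elim N)
      have "exp 1 \<le> real N" using exp_le elim by linarith
      then have "ln (exp 1) \<le> ln (real N)" using elim by (subst ln_le_cancel_iff) auto
      then have "1 \<le> ln (real N)" by simp
      then have "real N \<le> real N * ln (real N)" using elim by simp
      then show ?case using beta_pos[of N] elim by (intro divide_left_mono) auto
    qed
  qed
  then have "((\<lambda>N. inverse (\<beta> N / real N)) \<longlongrightarrow> 0) sequentially"
    by (rule tendsto_inverse_0_at_top)
  then show ?thesis by simp
qed

section \<open>Empirical measures and partitions\<close>

lemma integral_empirical:
  fixes f :: "'a::euclidean_space \<Rightarrow> real"
  assumes N: "N > 0" and f: "f \<in> borel_measurable borel"
  shows "integral\<^sup>L (empirical N x) f = (\<Sum>i<N. f (x i)) / real N"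
proof -
  have "sets (uniform_count_measure {..<N}) = sets (count_space {..<N})"
    by (simp add: sets_uniform_count_measure)
  then have m: "x \<in> uniform_count_measure {..<N} \<rightarrow>\<^sub>M borel"
    by (simp cong: measurable_cong_sets add: measurable_count_space_eq1)
  show ?thesis unfolding empirical_def
    by (simp add: integral_distr[OF m f] integral_uniform_count_measure)
qed

lemma measurable_boltz[measurable (raw)]:
  assumes [measurable]: "f \<in> borel_measurable M"
  shows "(\<lambda>x. boltz b (f x)) \<in> borel_measurable M"
  unfolding boltz_def by measurable

lemma compact_partition_small_diameter:
  fixes K :: "'a::euclidean_space set"
  assumes K: "compact K" and e: "e > 0"
  obtains M :: nat and C where "\<And>k. k < M \<Longrightarrow> C k \<subseteq> K" "\<And>k. k < M \<Longrightarrow> C k \<in> sets borel"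
    "\<And>k x y. k < M \<Longrightarrow> x \<in> C k \<Longrightarrow> y \<in> C k \<Longrightarrow> dist x y \<le> e"
    "disjoint_family_on C {..<M}" "(\<Union>k<M. C k) = K"
proof -
  have "K \<subseteq> (\<Union>x\<in>K. ball x (e/2))" using e by auto
  then obtain D where D: "D \<subseteq> K" "finite D" "K \<subseteq> (\<Union>x\<in>D. ball x (e/2))"
    using compactE_image[OF K, of K "\<lambda>x. ball x (e/2)"] by auto
  obtain xs where xs: "set xs = D" using D(2) finite_list by blast
  define M where "M = length xs"
  define C where "C k = (K \<inter> ball (xs!k) (e/2)) - (\<Union>j<k. ball (xs!j) (e/2))" for k
  have sub: "C k \<subseteq> K" for k by (auto simp: C_def)
  have meas: "C k \<in> sets borel" for k
    unfolding C_def using K by (intro sets.Diff sets.Int sets.finite_UN) (auto intro: borel_compact)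
  have diam: "dist x y \<le> e" if "x \<in> C k" "y \<in> C k" for x y k
  proof -
    have "dist x (xs!k) < e/2" "dist y (xs!k) < e/2" using that by (auto simp: C_def dist_commute)
    then show ?thesis using dist_triangle[of x y "xs!k"] by (simp add: dist_commute)
  qed
  have disj: "disjoint_family_on C {..<M}"
    unfolding disjoint_family_on_def
  proof (intro ballI impI)
    fix k l assume "k \<in> {..<M}" "l \<in> {..<M}" "k \<noteq> l"
    then consider "k < l" | "l < k" by linarith
    then show "C k \<inter> C l = {}" by cases (auto simp: C_def)
  qed
  have cover: "(\<Union>k<M. C k) = K"
  proof
    show "(\<Union>k<M. C k) \<subseteq> K" using sub by auto
    show "K \<subseteq> (\<Union>k<M. C k)"
    proof
      fix x assume x: "x \<in> K"
      then obtain z where "z \<in> D" "x \<in> ball z (e/2)" using D by auto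
      then obtain j where j: "j < M" "x \<in> ball (xs!j) (e/2)" using xs by (auto simp: M_def in_set_conv_nth)
      define k where "k = (LEAST j. j < M \<and> x \<in> ball (xs!j) (e/2))"
      have k: "k < M" "x \<in> ball (xs!k) (e/2)"
        using LeastI[of "\<lambda>j. j < M \<and> x \<in> ball (xs!j) (e/2)", OF conjI[OF j(1) j(2)]] by (auto simp: k_def)
      have "x \<notin> ball (xs!i) (e/2)" if "i < k" for i
        using not_less_Least[of i "\<lambda>j. j < M \<and> x \<in> ball (xs!j) (e/2)"] that k by (auto simp: k_def)
      then have "x \<in> C k" using x k by (auto simp: C_def)
      then show "x \<in> (\<Union>k<M. C k)" using k by auto
    qed
  qed
  show ?thesis using that[of M C] sub meas diam disj cover by blast
qed

lemma lipschitz_borel_measurable: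
  fixes f :: "'a::euclidean_space \<Rightarrow> real"
  shows "L-lipschitz_on UNIV f \<Longrightarrow> f \<in> borel_measurable borel"
  by (intro borel_measurable_continuous_onI lipschitz_on_continuous_on) auto

section \<open>A density bounded above and below on a box\<close>

locale box_density =
  fixes V :: "'a::euclidean_space \<Rightarrow> real" and W :: "'a \<Rightarrow> 'a \<Rightarrow> ereal"
    and h :: "'a \<Rightarrow> real" and \<mu> :: "'a measure" and a b :: 'a and \<delta> :: real
  assumes W_cont: "continuous_on UNIV (\<lambda>(x, y). W x y)"
    and W_sym: "\<And>x y. W x y = W y x"
    and V_cont: "continuous_on UNIV V"
    and W_lower: "\<exists>c \<epsilon>o. 0 < \<epsilon>o \<and> \<epsilon>o < 1 \<and> (\<forall>x y. W x y \<ge> ereal (c - \<epsilon>o * (V x + V y)))"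
    and h_meas: "h \<in> borel_measurable lborel"
    and mu_def: "\<mu> = density lborel (\<lambda>x. ennreal (h x))"
    and mu_prob: "prob_space \<mu>"
    and h_supp: "\<And>x. x \<notin> cbox a b \<Longrightarrow> h x = 0"
    and delta_pos: "\<delta> > 0"
    and h_bounds: "\<And>x. x \<in> cbox a b \<Longrightarrow> \<delta> \<le> h x \<and> h x \<le> 1 / \<delta>"
begin

sublocale mu: prob_space \<mu> by (rule mu_prob)

lemma h_nonneg: "h x \<ge> 0"
  using h_supp h_bounds delta_pos by (cases "x \<in> cbox a b") (auto intro: order_trans[of 0 \<delta>])

lemma h_le: "h x \<le> 1 / \<delta>"
  using h_supp h_bounds delta_pos by (cases "x \<in> cbox a b") auto

lemma h_borel[measurable]: "h \<in> borel_measurable borel"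
  using h_meas by simp

lemma sets_mu[measurable_cong, simp]: "sets \<mu> = sets borel"
  by (simp add: mu_def)

lemma space_mu[simp]: "space \<mu> = UNIV"
  by (simp add: mu_def)

lemma V_measurable[measurable]: "V \<in> borel_measurable borel"
  by (rule borel_measurable_continuous_onI[OF V_cont])

lemma W_measurable[measurable (raw)]:
  assumes [measurable]: "f \<in> borel_measurable M" "g \<in> borel_measurable M"
  shows "(\<lambda>x. W (f x) (g x)) \<in> borel_measurable M"
proof -
  have "(\<lambda>(x, y). W x y) \<in> borel_measurable borel"
    by (rule borel_measurable_continuous_onI[OF W_cont])
  then have W_borel: "(\<lambda>p. W (fst p) (snd p)) \<in> borel_measurable borel"
    by (simp add: case_prod_beta')
  have "(\<lambda>x. (f x, g x)) \<in> M \<rightarrow>\<^sub>M borel \<Otimes>\<^sub>M borel" by measurable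
  then have "(\<lambda>x. (f x, g x)) \<in> M \<rightarrow>\<^sub>M (borel :: ('a \<times> 'a) measure)"
    by (simp add: borel_prod)
  from measurable_compose[OF this W_borel] show ?thesis by simp
qed

lemma HN_measurable:
  assumes sets: "\<And>i. i < N \<Longrightarrow> sets (Mi i) = sets borel"
  shows "HN V W N \<in> borel_measurable (PiM {..<N} Mi)"
proof -
  have [measurable]: "(\<lambda>x. x i) \<in> borel_measurable (PiM {..<N} Mi)" if "i < N" for i
    using measurable_component_singleton[of i "{..<N}" Mi] that sets
    by (simp cong: measurable_cong_sets)
  show ?thesis unfolding HN_def[abs_def] by measurable
qed

lemma W_neq_minf: "W x y \<noteq> - \<infinity>"
proof -
  obtain c \<epsilon>o where "\<And>x y. W x y \<ge> ereal (c - \<epsilon>o * (V x + V y))"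
    using W_lower by auto
  then show ?thesis by (metis MInfty_neq_ereal(1) ereal_infty_less_eq(2))
qed

definition V_bound :: real where
  "V_bound = (SOME B. B \<ge> 0 \<and> (\<forall>x\<in>cbox a b. \<bar>V x\<bar> \<le> B))"

lemma V_bound: "V_bound \<ge> 0 \<and> (\<forall>x\<in>cbox a b. \<bar>V x\<bar> \<le> V_bound)"
proof -
  have "bounded (V ` cbox a b)"
    by (intro compact_imp_bounded compact_continuous_image continuous_on_subset[OF V_cont]) auto
  then obtain B where "\<forall>x\<in>cbox a b. \<bar>V x\<bar> \<le> B" by (auto simp: bounded_iff)
  then have "max 0 B \<ge> 0 \<and> (\<forall>x\<in>cbox a b. \<bar>V x\<bar> \<le> max 0 B)" by auto
  then show ?thesis unfolding V_bound_def by (rule someI)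
qed

lemma abs_V_le_V_bound: "x \<in> cbox a b \<Longrightarrow> \<bar>V x\<bar> \<le> V_bound"
  using V_bound by auto

lemma V_bound_nonneg: "V_bound \<ge> 0"
  using V_bound by auto

definition W_floor :: real where
  "W_floor = (SOME L. L \<le> 0 \<and> (\<forall>x\<in>cbox a b. \<forall>y\<in>cbox a b. W x y \<ge> ereal L))"

lemma W_floor: "W_floor \<le> 0 \<and> (\<forall>x\<in>cbox a b. \<forall>y\<in>cbox a b. W x y \<ge> ereal W_floor)"
proof -
  obtain c \<epsilon>o where ce: "0 < \<epsilon>o" "\<epsilon>o < 1" "\<And>x y. W x y \<ge> ereal (c - \<epsilon>o * (V x + V y))"
    using W_lower by auto
  have "\<exists>L. L \<le> 0 \<and> (\<forall>x\<in>cbox a b. \<forall>y\<in>cbox a b. W x y \<ge> ereal L)"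
  proof (intro exI[of _ "min 0 (c - 2 * V_bound)"] conjI ballI)
    fix x y assume xy: "x \<in> cbox a b" "y \<in> cbox a b"
    have "\<epsilon>o * (V x + V y) \<le> \<epsilon>o * (2 * V_bound)"
      using abs_V_le_V_bound[OF xy(1)] abs_V_le_V_bound[OF xy(2)] ce by (intro mult_left_mono) auto
    also have "\<dots> \<le> 2 * V_bound" using ce V_bound_nonneg by (intro mult_left_le_one_le) auto
    finally have "min 0 (c - 2 * V_bound) \<le> c - \<epsilon>o * (V x + V y)" by linarith
    then have "ereal (min 0 (c - 2 * V_bound)) \<le> ereal (c - \<epsilon>o * (V x + V y))"
      by (simp only: ereal_less_eq)
    then show "ereal (min 0 (c - 2 * V_bound)) \<le> W x y" using ce(3) order_trans by blast
  qed simp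
  then show ?thesis unfolding W_floor_def by (rule someI_ex)
qed

definition pair_energy :: "'a \<times> 'a \<Rightarrow> ereal" where
  "pair_energy z = ereal (V (fst z)) + ereal (V (snd z)) + W (fst z) (snd z)"

definition real_pair_energy :: "'a \<times> 'a \<Rightarrow> real" where
  "real_pair_energy z = V (fst z) + V (snd z) + real_of_ereal (W (fst z) (snd z))"

definition energy_floor :: real where
  "energy_floor = W_floor - 2 * V_bound"

lemma pair_energy_measurable[measurable]: "pair_energy \<in> borel_measurable (M1 \<Otimes>\<^sub>M M2)"
  if "sets M1 = sets borel" "sets M2 = sets borel" for M1 M2 :: "'a measure"
proof -
  have "pair_energy \<in> borel_measurable (borel \<Otimes>\<^sub>M borel)" unfolding pair_energy_def by measurable
  then show ?thesis using that by (simp cong: measurable_cong_sets sets_pair_measure_cong)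
qed

lemma real_pair_energy_measurable[measurable]: "real_pair_energy \<in> borel_measurable (M1 \<Otimes>\<^sub>M M2)"
  if "sets M1 = sets borel" "sets M2 = sets borel" for M1 M2 :: "'a measure"
proof -
  have "real_pair_energy \<in> borel_measurable (borel \<Otimes>\<^sub>M borel)" unfolding real_pair_energy_def by measurable
  then show ?thesis using that by (simp cong: measurable_cong_sets sets_pair_measure_cong)
qed

lemma pair_energy_eq_real: "W (fst z) (snd z) \<noteq> \<infinity> \<Longrightarrow> pair_energy z = ereal (real_pair_energy z)"
  using W_neq_minf[of "fst z" "snd z"] unfolding pair_energy_def real_pair_energy_def
  by (cases "W (fst z) (snd z)") auto

lemma real_pair_energy_symmetric: "real_pair_energy (y, x) = real_pair_energy (x, y)"
  by (simp add: real_pair_energy_def W_sym)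

lemma energy_floor_nonpos: "energy_floor \<le> 0"
  using W_floor V_bound_nonneg by (simp add: energy_floor_def)

lemma real_pair_energy_ge_floor:
  assumes z: "fst z \<in> cbox a b" "snd z \<in> cbox a b"
  shows "real_pair_energy z \<ge> energy_floor"
proof -
  have "W (fst z) (snd z) \<ge> ereal W_floor" using W_floor z by blast
  then have "real_of_ereal (W (fst z) (snd z)) \<ge> W_floor"
    using W_floor W_neq_minf[of "fst z" "snd z"] by (cases "W (fst z) (snd z)") auto
  then show ?thesis
    using abs_V_le_V_bound[OF z(1)] abs_V_le_V_bound[OF z(2)]
    by (simp add: real_pair_energy_def energy_floor_def)
qed

lemma pair_energy_ge_floor:
  assumes z: "fst z \<in> cbox a b" "snd z \<in> cbox a b"
  shows "pair_energy z \<ge> ereal energy_floor"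
proof (cases "W (fst z) (snd z) = \<infinity>")
  case True then show ?thesis by (simp add: pair_energy_def)
next
  case False then show ?thesis using pair_energy_eq_real real_pair_energy_ge_floor[OF z] by simp
qed

lemma AE_mu_in_box: "AE x in \<mu>. x \<in> cbox a b"
proof (rule AE_I'[of "- cbox a b"])
  have "(\<lambda>x. ennreal (h x) * indicator (- cbox a b) x) = (\<lambda>x. 0)"
    by (rule ext) (auto simp: indicator_def dest: h_supp)
  then have "emeasure \<mu> (- cbox a b) = 0"
    by (simp add: mu_def emeasure_density)
  then show "- cbox a b \<in> null_sets \<mu>" by (simp add: null_sets_def)
qed auto

lemma AE_mu_pair:
  assumes A: "A \<in> sets borel" and AE: "AE x in \<mu>. x \<in> A"
  shows "AE z in \<mu> \<Otimes>\<^sub>M \<mu>. fst z \<in> A \<and> snd z \<in> A"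
proof -
  interpret pp: pair_prob_space \<mu> \<mu> ..
  show ?thesis
  proof (rule pp.AE_pair_measure)
    show "{z \<in> space (\<mu> \<Otimes>\<^sub>M \<mu>). fst z \<in> A \<and> snd z \<in> A} \<in> sets (\<mu> \<Otimes>\<^sub>M \<mu>)"
      using A by measurable
    show "AE x in \<mu>. AE y in \<mu>. fst (x, y) \<in> A \<and> snd (x, y) \<in> A"
      using AE by eventually_elim (use AE in \<open>auto elim: eventually_mono\<close>)
  qed
qed

lemma AE_mu_pair_in_box: "AE z in \<mu> \<Otimes>\<^sub>M \<mu>. fst z \<in> cbox a b \<and> snd z \<in> cbox a b"
  by (rule AE_mu_pair[OF _ AE_mu_in_box]) simp

lemma Irate_pair_energy:
  "Irate V W \<mu> = (enn2ereal (\<integral>\<^sup>+ z. e2ennreal (pair_energy z) \<partial>(\<mu> \<Otimes>\<^sub>M \<mu>))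
       - enn2ereal (\<integral>\<^sup>+ z. e2ennreal (- pair_energy z) \<partial>(\<mu> \<Otimes>\<^sub>M \<mu>))) / 2"
  by (simp add: Irate_def pair_energy_def[abs_def] Let_def)

lemma nn_integral_neg_pair_energy_le:
  "(\<integral>\<^sup>+ z. e2ennreal (- pair_energy z) \<partial>(\<mu> \<Otimes>\<^sub>M \<mu>)) \<le> ennreal (- energy_floor)"
proof -
  interpret pp: pair_prob_space \<mu> \<mu> ..
  have "(\<integral>\<^sup>+ z. e2ennreal (- pair_energy z) \<partial>(\<mu> \<Otimes>\<^sub>M \<mu>)) \<le> (\<integral>\<^sup>+ z. ennreal (- energy_floor) \<partial>(\<mu> \<Otimes>\<^sub>M \<mu>))"
  proof (rule nn_integral_mono_AE)
    show "AE z in \<mu> \<Otimes>\<^sub>M \<mu>. e2ennreal (- pair_energy z) \<le> ennreal (- energy_floor)"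
      using AE_mu_pair_in_box
    proof eventually_elim
      case (elim z)
      then have "- pair_energy z \<le> - ereal energy_floor"
        using pair_energy_ge_floor[of z] by (simp only: ereal_minus_le_minus)
      then have "- pair_energy z \<le> ereal (- energy_floor)" by simp
      then show ?case using e2ennreal_mono by fastforce
    qed
  qed
  also have "\<dots> = ennreal (- energy_floor)"
    using pp.emeasure_space_1 by simp
  finally show ?thesis .
qed

lemma Irate_eq_infinity:
  assumes "(\<integral>\<^sup>+ z. e2ennreal (pair_energy z) \<partial>(\<mu> \<Otimes>\<^sub>M \<mu>)) = \<infinity>"
  shows "Irate V W \<mu> = \<infinity>"
proof -
  have "(\<integral>\<^sup>+ z. e2ennreal (- pair_energy z) \<partial>(\<mu> \<Otimes>\<^sub>M \<mu>)) \<noteq> \<top>"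
    using nn_integral_neg_pair_energy_le by (auto simp: top_unique)
  then obtain t where t: "enn2ereal (\<integral>\<^sup>+ z. e2ennreal (- pair_energy z) \<partial>(\<mu> \<Otimes>\<^sub>M \<mu>)) = ereal t"
    using enn2ereal_eq_ereal_enn2real by blast
  have "enn2ereal (\<integral>\<^sup>+ z. e2ennreal (pair_energy z) \<partial>(\<mu> \<Otimes>\<^sub>M \<mu>)) = \<infinity>"
    using assms by (simp add: enn2ereal_eq_top_iff)
  then show ?thesis unfolding Irate_pair_energy t by simp
qed

lemma
  assumes fin: "(\<integral>\<^sup>+ z. e2ennreal (pair_energy z) \<partial>(\<mu> \<Otimes>\<^sub>M \<mu>)) \<noteq> \<infinity>"
  shows AE_W_finite: "AE z in \<mu> \<Otimes>\<^sub>M \<mu>. W (fst z) (snd z) \<noteq> \<infinity>"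
    and integrable_real_pair_energy: "integrable (\<mu> \<Otimes>\<^sub>M \<mu>) real_pair_energy"
    and Irate_eq_integral: "Irate V W \<mu> = ereal (integral\<^sup>L (\<mu> \<Otimes>\<^sub>M \<mu>) real_pair_energy / 2)"
proof -
  interpret pp: pair_prob_space \<mu> \<mu> ..
  have Fm: "(\<lambda>z. e2ennreal (pair_energy z)) \<in> borel_measurable (\<mu> \<Otimes>\<^sub>M \<mu>)" by measurable
  have "AE z in \<mu> \<Otimes>\<^sub>M \<mu>. e2ennreal (pair_energy z) \<noteq> \<infinity>"
    by (rule nn_integral_PInf_AE[OF Fm fin])
  then show AEW: "AE z in \<mu> \<Otimes>\<^sub>M \<mu>. W (fst z) (snd z) \<noteq> \<infinity>"
    by eventually_elim (auto simp: pair_energy_def)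
  have AEF: "AE z in \<mu> \<Otimes>\<^sub>M \<mu>. pair_energy z = ereal (real_pair_energy z)"
    using AEW by eventually_elim (simp add: pair_energy_eq_real)
  have bnd: "AE z in \<mu> \<Otimes>\<^sub>M \<mu>.
      ennreal (norm (real_pair_energy z)) \<le> e2ennreal (pair_energy z) + ennreal (- 2 * energy_floor)"
    using AEF AE_mu_pair_in_box
  proof eventually_elim
    case (elim z)
    have "norm (real_pair_energy z) \<le> max 0 (real_pair_energy z) + (- 2 * energy_floor)"
      using real_pair_energy_ge_floor[of z] elim(2) energy_floor_nonpos by auto
    then have "ennreal (norm (real_pair_energy z)) \<le> ennreal (max 0 (real_pair_energy z) + (- 2 * energy_floor))"
      by (rule ennreal_leI)
    also have "\<dots> = ennreal (max 0 (real_pair_energy z)) + ennreal (- 2 * energy_floor)"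
      using energy_floor_nonpos by (intro ennreal_plus) auto
    also have "ennreal (max 0 (real_pair_energy z)) = e2ennreal (pair_energy z)"
      using elim(1) by (simp add: e2ennreal_ereal ennreal_max_0)
    finally show ?case .
  qed
  have "(\<integral>\<^sup>+ z. ennreal (norm (real_pair_energy z)) \<partial>(\<mu> \<Otimes>\<^sub>M \<mu>))
      \<le> (\<integral>\<^sup>+ z. e2ennreal (pair_energy z) + ennreal (- 2 * energy_floor) \<partial>(\<mu> \<Otimes>\<^sub>M \<mu>))"
    by (rule nn_integral_mono_AE[OF bnd])
  also have "\<dots> = (\<integral>\<^sup>+ z. e2ennreal (pair_energy z) \<partial>(\<mu> \<Otimes>\<^sub>M \<mu>)) + ennreal (- 2 * energy_floor)"
    using pp.emeasure_space_1 Fm by (subst nn_integral_add) auto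
  also have "\<dots> < \<infinity>" using fin by (simp add: less_top)
  finally show int: "integrable (\<mu> \<Otimes>\<^sub>M \<mu>) real_pair_energy"
    by (subst integrable_iff_bounded) auto
  have pos: "(\<integral>\<^sup>+ z. e2ennreal (pair_energy z) \<partial>(\<mu> \<Otimes>\<^sub>M \<mu>))
      = (\<integral>\<^sup>+ z. ennreal (real_pair_energy z) \<partial>(\<mu> \<Otimes>\<^sub>M \<mu>))"
    using AEF by (intro nn_integral_cong_AE) (auto simp: e2ennreal_ereal)
  have neg: "(\<integral>\<^sup>+ z. e2ennreal (- pair_energy z) \<partial>(\<mu> \<Otimes>\<^sub>M \<mu>))
      = (\<integral>\<^sup>+ z. ennreal (- real_pair_energy z) \<partial>(\<mu> \<Otimes>\<^sub>M \<mu>))"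
    using AEF by (intro nn_integral_cong_AE) (auto simp: e2ennreal_ereal)
  have pos_fin: "(\<integral>\<^sup>+ z. ennreal (real_pair_energy z) \<partial>(\<mu> \<Otimes>\<^sub>M \<mu>)) \<noteq> \<top>"
    using fin pos by simp
  have neg_fin: "(\<integral>\<^sup>+ z. ennreal (- real_pair_energy z) \<partial>(\<mu> \<Otimes>\<^sub>M \<mu>)) \<noteq> \<top>"
    using nn_integral_neg_pair_energy_le neg by (auto simp: top_unique)
  show "Irate V W \<mu> = ereal (integral\<^sup>L (\<mu> \<Otimes>\<^sub>M \<mu>) real_pair_energy / 2)"
    unfolding Irate_pair_energy pos neg enn2ereal_eq_ereal_enn2real[OF pos_fin]
      enn2ereal_eq_ereal_enn2real[OF neg_fin] real_lebesgue_integral_def[OF int]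
    by simp
qed

end

section \<open>Conditioning on the cells of a partition of the box\<close>

locale box_partition = box_density +
  fixes M :: nat and C :: "nat \<Rightarrow> 'a set" and e :: real
  assumes C_sub: "\<And>k. k < M \<Longrightarrow> C k \<subseteq> cbox a b"
    and C_meas: "\<And>k. k < M \<Longrightarrow> C k \<in> sets borel"
    and C_diam: "\<And>k x y. k < M \<Longrightarrow> x \<in> C k \<Longrightarrow> y \<in> C k \<Longrightarrow> dist x y \<le> e"
    and C_disj: "disjoint_family_on C {..<M}"
    and C_cover: "(\<Union>k<M. C k) = cbox a b"
begin

definition mass :: "nat \<Rightarrow> real" where
  "mass k = measure \<mu> (C k)"

definition occupied :: "nat set" where
  "occupied = {k. k < M \<and> mass k > 0}"

definition cell_law :: "nat \<Rightarrow> 'a measure" where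
  "cell_law k = density \<mu> (\<lambda>x. ennreal (indicator (C k) x / mass k))"

definition occupied_union :: "'a set" where
  "occupied_union = (\<Union>k\<in>occupied. C k)"

lemma finite_occupied: "finite occupied"
  and occupied_less: "k \<in> occupied \<Longrightarrow> k < M"
  and mass_pos: "k \<in> occupied \<Longrightarrow> mass k > 0"
  by (auto simp: occupied_def intro: finite_subset[of _ "{..<M}"])

lemma mass_nonneg: "mass k \<ge> 0"
  by (simp add: mass_def)

lemma C_occupied_measurable[measurable]: "k \<in> occupied \<Longrightarrow> C k \<in> sets borel"
  using C_meas occupied_less by auto

lemma sum_mass: "(\<Sum>k\<in>occupied. mass k) = 1"
proof -
  have "measure \<mu> (cbox a b) = 1"
    using mu.prob_compl[of "cbox a b"] AE_mu_in_box
    by (simp add: mu.prob_eq_1[symmetric] Compl_eq_Diff_UNIV)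
  moreover have "measure \<mu> (\<Union>k\<in>{..<M}. C k) = (\<Sum>k<M. measure \<mu> (C k))"
    using C_meas C_disj by (intro measure_finite_Union) (auto simp: mu.emeasure_eq_measure)
  moreover have "(\<Sum>k<M. mass k) = (\<Sum>k\<in>occupied. mass k)"
    using mass_nonneg by (intro sum.mono_neutral_right) (auto simp: occupied_def less_le)
  ultimately show ?thesis using C_cover by (simp add: mass_def)
qed

lemma occupied_nonempty: "occupied \<noteq> {}"
  using sum_mass by auto

lemma AE_mu_occupied_union: "AE x in \<mu>. x \<in> occupied_union"
proof -
  have "C k \<in> null_sets \<mu>" if "k < M" "k \<notin> occupied" for k
  proof -
    have "mass k = 0" using that mass_nonneg[of k] by (auto simp: occupied_def)
    then show ?thesis using C_meas[OF that(1)] by (simp add: null_sets_def mass_def mu.emeasure_eq_measure)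
  qed
  then have "AE x in \<mu>. \<forall>k\<in>{..<M} - occupied. x \<notin> C k"
    by (subst AE_finite_all) (auto intro: AE_I')
  then show ?thesis using AE_mu_in_box
  proof eventually_elim
    case (elim x)
    then obtain k where "k < M" "x \<in> C k" using C_cover by blast
    then show ?case using elim(1) by (auto simp: occupied_union_def)
  qed
qed

lemma occupied_union_measurable[measurable]: "occupied_union \<in> sets borel"
  unfolding occupied_union_def using finite_occupied by (intro sets.finite_UN) auto

lemma sum_indicator_occupied: "(\<Sum>k\<in>occupied. indicator (C k) x :: real) = indicator occupied_union x"
proof -
  have "disjoint_family_on C occupied"
    using C_disj by (rule disjoint_family_on_mono[rotated]) (auto simp: occupied_def)
  then show ?thesis
    unfolding occupied_union_def by (rule indicator_UN_disjoint[OF finite_occupied, symmetric])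
qed

lemma sets_cell_law[measurable_cong]: "sets (cell_law k) = sets borel"
  by (simp add: cell_law_def)

lemma prob_space_cell_law: "k \<in> occupied \<Longrightarrow> prob_space (cell_law k)"
proof
  assume k: "k \<in> occupied"
  have "emeasure (cell_law k) (space (cell_law k)) = (\<integral>\<^sup>+ x. ennreal (indicator (C k) x / mass k) \<partial>\<mu>)"
    using k by (simp add: cell_law_def emeasure_density)
  also have "\<dots> = (\<integral>\<^sup>+ x. ennreal (1 / mass k) * indicator (C k) x \<partial>\<mu>)"
    by (intro nn_integral_cong) (auto simp: indicator_def)
  also have "\<dots> = ennreal (1 / mass k) * emeasure \<mu> (C k)"
    using k by (subst nn_integral_cmult_indicator) auto
  also have "\<dots> = 1"
    using mass_pos[OF k] by (simp add: mu.emeasure_eq_measure mass_def[symmetric] ennreal_mult[symmetric])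
  finally show "emeasure (cell_law k) (space (cell_law k)) = 1" .
qed

lemma cell_law_lborel:
  assumes k: "k \<in> occupied"
  shows "cell_law k = density lborel (\<lambda>x. ennreal (h x * indicator (C k) x / mass k))"
proof -
  have "cell_law k = density lborel (\<lambda>x. ennreal (h x) * ennreal (indicator (C k) x / mass k))"
  proof -
    have eq: "\<And>f. density \<mu> f = density (density lborel (\<lambda>x. ennreal (h x))) f"
      by (simp add: mu_def)
    show ?thesis unfolding cell_law_def eq using k by (subst density_density_eq) auto
  qed
  also have "\<dots> = density lborel (\<lambda>x. ennreal (h x * indicator (C k) x / mass k))"
    using k h_nonneg mass_nonneg by (intro density_cong) (auto simp: ennreal_mult[symmetric])
  finally show ?thesis .
qed

lemma AE_cell_law: "k \<in> occupied \<Longrightarrow> AE x in cell_law k. x \<in> C k"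
  unfolding cell_law_def by (subst AE_density) (auto simp: indicator_def)

definition cell_pair_density :: "nat \<Rightarrow> nat \<Rightarrow> 'a \<times> 'a \<Rightarrow> real" where
  "cell_pair_density k l z = indicator (C k) (fst z) * indicator (C l) (snd z) / (mass k * mass l)"

lemma cell_pair_density_measurable:
  assumes "k \<in> occupied" "l \<in> occupied"
  shows "cell_pair_density k l \<in> borel_measurable (\<mu> \<Otimes>\<^sub>M \<mu>)"
  using assms unfolding cell_pair_density_def by measurable

lemma cell_pair_density_nonneg: "cell_pair_density k l z \<ge> 0"
  using mass_nonneg by (simp add: cell_pair_density_def)

lemma cell_pair_density_le:
  "k \<in> occupied \<Longrightarrow> l \<in> occupied \<Longrightarrow> cell_pair_density k l z \<le> 1 / (mass k * mass l)"
  using mass_pos[of k] mass_pos[of l] by (auto simp: cell_pair_density_def indicator_def divide_right_mono)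

lemma cell_law_pair:
  assumes k: "k \<in> occupied" and l: "l \<in> occupied"
  shows "cell_law k \<Otimes>\<^sub>M cell_law l = density (\<mu> \<Otimes>\<^sub>M \<mu>) (\<lambda>z. ennreal (cell_pair_density k l z))"
proof -
  interpret nl: prob_space "cell_law l" using prob_space_cell_law[OF l] .
  have "cell_law k \<Otimes>\<^sub>M cell_law l = density (\<mu> \<Otimes>\<^sub>M \<mu>)
      (\<lambda>(x, y). ennreal (indicator (C k) x / mass k) * ennreal (indicator (C l) y / mass l))"
    unfolding cell_law_def using k l
    by (intro pair_measure_density)
      (auto simp: cell_law_def[symmetric] mu.sigma_finite_measure_axioms nl.sigma_finite_measure_axioms)
  also have "\<dots> = density (\<mu> \<Otimes>\<^sub>M \<mu>) (\<lambda>z. ennreal (cell_pair_density k l z))"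
    using mass_nonneg k l cell_pair_density_measurable[OF k l]
    by (intro density_cong) (auto simp: cell_pair_density_def ennreal_mult[symmetric] split: prod.splits)
  finally show ?thesis .
qed

definition min_mass :: real where
  "min_mass = Min (mass ` occupied)"

definition max_cell_density :: real where
  "max_cell_density = 1 / (\<delta> * min_mass)"

lemma min_mass_pos: "min_mass > 0"
  unfolding min_mass_def using finite_occupied occupied_nonempty mass_pos by (subst Min_gr_iff) auto

lemma min_mass_le: "k \<in> occupied \<Longrightarrow> min_mass \<le> mass k"
  unfolding min_mass_def using finite_occupied by (intro Min_le) auto

lemma max_cell_density_pos: "max_cell_density > 0"
  using min_mass_pos delta_pos by (simp add: max_cell_density_def)

lemma cell_density_le:
  assumes k: "k \<in> occupied"
  shows "h y * indicator (C k) y / mass k \<le> max_cell_density"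
proof (cases "y \<in> C k")
  case True
  have "h y / mass k \<le> (1 / \<delta>) / min_mass"
    using h_le[of y] h_nonneg[of y] min_mass_le[OF k] min_mass_pos mass_pos[OF k] delta_pos
    by (intro frac_le) auto
  then show ?thesis using True by (simp add: max_cell_density_def)
next
  case False then show ?thesis using max_cell_density_pos by simp
qed

lemma nn_integral_cell_laws_le:
  fixes c :: "nat \<Rightarrow> nat" and G :: "(nat \<Rightarrow> 'a) \<Rightarrow> ennreal"
  assumes c: "\<And>i. c i \<in> occupied"
    and G: "G \<in> borel_measurable (PiM {..<N} (\<lambda>i. lborel))"
  shows "(\<integral>\<^sup>+ x. G x \<partial>PiM {..<N} (\<lambda>i. cell_law (c i)))
     \<le> ennreal (max_cell_density ^ N) *
        (\<integral>\<^sup>+ x. indicator {x. \<forall>i<N. x i \<in> C (c i)} x * G x \<partial>PiM {..<N} (\<lambda>i. lborel))"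
proof -
  define f where "f i y = ennreal (h y * indicator (C (c i)) y / mass (c i))" for i y
  have [measurable]: "C (c i) \<in> sets borel" for i using c by simp
  have f_meas[measurable]: "f i \<in> borel_measurable lborel" for i unfolding f_def by measurable
  have cell_law_f: "cell_law (c i) = density lborel (f i)" for i
    using cell_law_lborel[OF c[of i]] by (simp add: f_def[abs_def])
  have sf: "sigma_finite_measure (density lborel (f i))" for i
    using prob_space_cell_law[OF c[of i]] cell_law_f[of i] by (metis prob_space_imp_sigma_finite)
  have PiM_eq: "PiM {..<N} (\<lambda>i. cell_law (c i)) = density (PiM {..<N} (\<lambda>i. lborel)) (\<lambda>x. \<Prod>i<N. f i (x i))"
    unfolding cell_law_f by (rule PiM_density_lborel[OF f_meas sf]) simp
  have prod_le: "(\<Prod>i<N. f i (x i)) \<le> ennreal (max_cell_density ^ N) * indicator {x. \<forall>i<N. x i \<in> C (c i)} x" for x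
  proof (cases "\<forall>i<N. x i \<in> C (c i)")
    case True
    have "(\<Prod>i<N. f i (x i)) = ennreal (\<Prod>i<N. h (x i) * indicator (C (c i)) (x i) / mass (c i))"
      unfolding f_def using h_nonneg mass_nonneg by (intro prod_ennreal) auto
    also have "\<dots> \<le> ennreal (\<Prod>i<N. max_cell_density)"
      using h_nonneg mass_nonneg cell_density_le[OF c] by (intro ennreal_leI prod_mono) auto
    finally show ?thesis using True by simp
  next
    case False
    then obtain i where i: "i < N" "x i \<notin> C (c i)" by auto
    have "f i (x i) = 0" using i by (simp add: f_def)
    then have "(\<Prod>i<N. f i (x i)) = 0" using prod_zero[of "{..<N}" "\<lambda>i. f i (x i)"] i(1) by auto
    then show ?thesis by (simp only: zero_le)
  qed
  have "(\<integral>\<^sup>+ x. G x \<partial>PiM {..<N} (\<lambda>i. cell_law (c i)))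
      = (\<integral>\<^sup>+ x. (\<Prod>i<N. f i (x i)) * G x \<partial>PiM {..<N} (\<lambda>i. lborel))"
    unfolding PiM_eq using G by (intro nn_integral_density) auto
  also have "\<dots> \<le> (\<integral>\<^sup>+ x. ennreal (max_cell_density ^ N) * (indicator {x. \<forall>i<N. x i \<in> C (c i)} x * G x)
      \<partial>PiM {..<N} (\<lambda>i. lborel))"
    by (intro nn_integral_mono) (use prod_le in \<open>auto simp: mult.assoc[symmetric] intro: mult_right_mono\<close>)
  also have "\<dots> = ennreal (max_cell_density ^ N) *
      (\<integral>\<^sup>+ x. indicator {x. \<forall>i<N. x i \<in> C (c i)} x * G x \<partial>PiM {..<N} (\<lambda>i. lborel))"
    using G by (intro nn_integral_cmult) auto
  finally show ?thesis .
qed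

definition cell_point :: "nat \<Rightarrow> 'a" where
  "cell_point k = (SOME y. y \<in> C k)"

lemma cell_point: assumes k: "k \<in> occupied" shows "cell_point k \<in> C k"
proof -
  have "C k \<noteq> {}" using mass_pos[OF k] by (auto simp: mass_def)
  then show ?thesis unfolding cell_point_def by (auto intro: someI)
qed

lemma lipschitz_near_cell_point:
  assumes f: "1-lipschitz_on UNIV f" and k: "k \<in> occupied" and z: "z \<in> C k"
  shows "\<bar>f z - f (cell_point k)\<bar> \<le> e"
proof -
  have "dist (f z) (f (cell_point k)) \<le> 1 * dist z (cell_point k)" by (rule lipschitz_onD[OF f]) auto
  also have "\<dots> \<le> e" using C_diam[OF occupied_less[OF k] z cell_point[OF k]] by simp
  finally show ?thesis by (simp add: dist_real_def)
qed

lemma integral_mu_le_cell_points: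
  assumes f: "1-lipschitz_on UNIV f" and f_bound: "\<And>x. \<bar>f x\<bar> \<le> 1"
  shows "integral\<^sup>L \<mu> f \<le> (\<Sum>k\<in>occupied. mass k * f (cell_point k)) + e"
proof -
  have [measurable]: "f \<in> borel_measurable borel" by (rule lipschitz_borel_measurable[OF f])
  have int: "integrable \<mu> (\<lambda>z. indicator (C k) z * f z)" if k: "k \<in> occupied" for k
  proof (rule mu.integrable_const_bound[where B=1])
    show "AE x in \<mu>. norm (indicator (C k) x * f x) \<le> 1"
      using f_bound by (auto simp: indicator_def abs_mult)
  qed (use k in measurable)
  have "integral\<^sup>L \<mu> f = integral\<^sup>L \<mu> (\<lambda>z. \<Sum>k\<in>occupied. indicator (C k) z * f z)"
  proof (rule integral_cong_AE)
    show "AE x in \<mu>. f x = (\<Sum>k\<in>occupied. indicator (C k) x * f x)"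
      using AE_mu_occupied_union
      by eventually_elim (simp add: sum_distrib_right[symmetric] sum_indicator_occupied)
  qed (use int in \<open>auto intro: borel_measurable_sum\<close>)
  also have "\<dots> = (\<Sum>k\<in>occupied. integral\<^sup>L \<mu> (\<lambda>z. indicator (C k) z * f z))"
    using int by (intro Bochner_Integration.integral_sum) auto
  also have "\<dots> \<le> (\<Sum>k\<in>occupied. integral\<^sup>L \<mu> (\<lambda>z. indicator (C k) z * (f (cell_point k) + e)))"
  proof (intro sum_mono integral_mono)
    fix k z assume k: "k \<in> occupied"
    show "integrable \<mu> (\<lambda>z. indicator (C k) z * f z)" by (rule int[OF k])
    show "integrable \<mu> (\<lambda>z. indicator (C k) z * (f (cell_point k) + e))"
      using k by (intro integrable_mult_left) (auto simp: mu.emeasure_eq_measure)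
    show "indicator (C k) z * f z \<le> indicator (C k) z * (f (cell_point k) + e)"
      using lipschitz_near_cell_point[OF f k, of z] by (auto simp: indicator_def)
  qed
  also have "\<dots> = (\<Sum>k\<in>occupied. mass k * (f (cell_point k) + e))"
    by (simp add: mass_def)
  also have "\<dots> = (\<Sum>k\<in>occupied. mass k * f (cell_point k)) + e"
    using sum_mass by (simp add: distrib_left sum.distrib sum_distrib_right[symmetric])
  finally show ?thesis .
qed

lemma empirical_mean_ge_cell_points:
  assumes f: "1-lipschitz_on UNIV f" and c: "\<And>i. c i \<in> occupied" and N: "N > 0"
    and x: "\<forall>i<N. x i \<in> C (c i)"
  shows "(\<Sum>i<N. f (x i)) / real N \<ge> (\<Sum>k\<in>occupied. freq N c k * f (cell_point k)) - e"
proof -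
  have "(\<Sum>i<N. f (cell_point (c i)) - e) \<le> (\<Sum>i<N. f (x i))"
  proof (intro sum_mono)
    fix i assume "i \<in> {..<N}"
    then show "f (cell_point (c i)) - e \<le> f (x i)"
      using lipschitz_near_cell_point[OF f c, of "x i" i] x by auto
  qed
  then have "(\<Sum>k\<in>occupied. real (card {i. i < N \<and> c i = k}) * f (cell_point k)) - real N * e
      \<le> (\<Sum>i<N. f (x i))"
    using sum_by_label[OF finite_occupied c, where F="\<lambda>k. f (cell_point k)" and N=N]
    by (simp add: sum_subtractf)
  then have "((\<Sum>k\<in>occupied. real (card {i. i < N \<and> c i = k}) * f (cell_point k)) - real N * e) / real N
      \<le> (\<Sum>i<N. f (x i)) / real N"
    using N by (intro divide_right_mono) auto
  then show ?thesis
    using N by (simp add: freq_def diff_divide_distrib sum_divide_distrib)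
qed

lemma dFM_empirical_le:
  assumes c: "\<And>i. c i \<in> occupied" and N: "N > 0" and x: "\<forall>i<N. x i \<in> C (c i)"
  shows "dFM \<mu> (empirical N x) \<le> 2 * e + (\<Sum>k\<in>occupied. \<bar>mass k - freq N c k\<bar>)"
  unfolding dFM_def
proof (rule cSUP_least)
  have "(\<lambda>_::'a. 0::real) \<in> {f. (\<forall>x. \<bar>f x\<bar> \<le> 1) \<and> 1-lipschitz_on UNIV f}"
    by (simp add: lipschitz_on_def)
  then show "{f::'a\<Rightarrow>real. (\<forall>x. \<bar>f x\<bar> \<le> 1) \<and> 1-lipschitz_on UNIV f} \<noteq> {}"
    by (metis empty_iff)
  fix f :: "'a \<Rightarrow> real" assume "f \<in> {f. (\<forall>x. \<bar>f x\<bar> \<le> 1) \<and> 1-lipschitz_on UNIV f}"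
  then have f_bound: "\<And>x. \<bar>f x\<bar> \<le> 1" and f: "1-lipschitz_on UNIV f" by auto
  have "integral\<^sup>L \<mu> f - integral\<^sup>L (empirical N x) f
      \<le> ((\<Sum>k\<in>occupied. mass k * f (cell_point k)) + e) - ((\<Sum>k\<in>occupied. freq N c k * f (cell_point k)) - e)"
    using integral_mu_le_cell_points[OF f f_bound] empirical_mean_ge_cell_points[OF f c N x]
      integral_empirical[OF N lipschitz_borel_measurable[OF f]] by simp
  also have "\<dots> = (\<Sum>k\<in>occupied. (mass k - freq N c k) * f (cell_point k)) + 2 * e"
    by (simp add: sum_subtractf left_diff_distrib)
  also have "(\<Sum>k\<in>occupied. (mass k - freq N c k) * f (cell_point k)) \<le> (\<Sum>k\<in>occupied. \<bar>mass k - freq N c k\<bar>)"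
  proof (intro sum_mono)
    fix k
    have "(mass k - freq N c k) * f (cell_point k) \<le> \<bar>mass k - freq N c k\<bar> * \<bar>f (cell_point k)\<bar>"
      by (simp add: abs_mult[symmetric])
    also have "\<dots> \<le> \<bar>mass k - freq N c k\<bar>"
      using f_bound[of "cell_point k"] by (simp add: mult_left_le)
    finally show "(mass k - freq N c k) * f (cell_point k) \<le> \<bar>mass k - freq N c k\<bar>" .
  qed
  finally show "integral\<^sup>L \<mu> f - integral\<^sup>L (empirical N x) f \<le> 2 * e + (\<Sum>k\<in>occupied. \<bar>mass k - freq N c k\<bar>)"
    by simp
qed

end

section \<open>Mean energy of configurations drawn from the cell laws\<close>

locale finite_energy_partition = box_partition +
  assumes finite_energy: "(\<integral>\<^sup>+ z. e2ennreal (pair_energy z) \<partial>(\<mu> \<Otimes>\<^sub>M \<mu>)) \<noteq> \<infinity>"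
begin

lemma integrable_cell_pair_density_energy:
  assumes k: "k \<in> occupied" and l: "l \<in> occupied"
  shows "integrable (\<mu> \<Otimes>\<^sub>M \<mu>) (\<lambda>z. cell_pair_density k l z * real_pair_energy z)"
proof (rule Bochner_Integration.integrable_bound)
  show "integrable (\<mu> \<Otimes>\<^sub>M \<mu>) (\<lambda>z. (1 / (mass k * mass l)) * norm (real_pair_energy z))"
    using integrable_real_pair_energy[OF finite_energy] by (intro integrable_mult_right) auto
  show "(\<lambda>z. cell_pair_density k l z * real_pair_energy z) \<in> borel_measurable (\<mu> \<Otimes>\<^sub>M \<mu>)"
    using cell_pair_density_measurable[OF k l] by measurable
  show "AE z in \<mu> \<Otimes>\<^sub>M \<mu>. norm (cell_pair_density k l z * real_pair_energy z)
      \<le> norm ((1 / (mass k * mass l)) * norm (real_pair_energy z))"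
  proof (intro AE_I2)
    fix z
    have "norm (cell_pair_density k l z * real_pair_energy z) = cell_pair_density k l z * norm (real_pair_energy z)"
      using cell_pair_density_nonneg[of k l z] by (simp add: abs_mult)
    also have "\<dots> \<le> (1 / (mass k * mass l)) * norm (real_pair_energy z)"
      using cell_pair_density_le[OF k l] by (intro mult_right_mono) auto
    finally show "norm (cell_pair_density k l z * real_pair_energy z)
        \<le> norm ((1 / (mass k * mass l)) * norm (real_pair_energy z))"
      using mass_pos[OF k] mass_pos[OF l] by simp
  qed
qed

lemma integrable_cell_pair_energy:
  assumes k: "k \<in> occupied" and l: "l \<in> occupied"
  shows "integrable (cell_law k \<Otimes>\<^sub>M cell_law l) real_pair_energy"
  using integrable_cell_pair_density_energy[OF k l] k l
  by (simp add: cell_law_pair integrable_density cell_pair_density_measurable cell_pair_density_nonneg)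

definition cell_energy :: "nat \<Rightarrow> nat \<Rightarrow> real" where
  "cell_energy k l = integral\<^sup>L (cell_law k \<Otimes>\<^sub>M cell_law l) real_pair_energy"

definition cell_V :: "nat \<Rightarrow> real" where
  "cell_V k = integral\<^sup>L (cell_law k) V"

lemma cell_energy_eq_integral:
  "k \<in> occupied \<Longrightarrow> l \<in> occupied \<Longrightarrow>
    cell_energy k l = integral\<^sup>L (\<mu> \<Otimes>\<^sub>M \<mu>) (\<lambda>z. cell_pair_density k l z * real_pair_energy z)"
  by (simp add: cell_energy_def cell_law_pair integral_density cell_pair_density_measurable
      cell_pair_density_nonneg)

lemma cell_energy_symmetric:
  assumes k: "k \<in> occupied" and l: "l \<in> occupied"
  shows "cell_energy k l = cell_energy l k"
proof -
  interpret nk: prob_space "cell_law k" using prob_space_cell_law[OF k] .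
  interpret nl: prob_space "cell_law l" using prob_space_cell_law[OF l] .
  interpret pair_sigma_finite "cell_law l" "cell_law k" ..
  have m: "real_pair_energy \<in> borel_measurable (cell_law l \<Otimes>\<^sub>M cell_law k)"
    by (rule real_pair_energy_measurable) (simp_all add: sets_cell_law)
  have "cell_energy l k = (\<integral>(x,y). real_pair_energy (y,x) \<partial>(cell_law k \<Otimes>\<^sub>M cell_law l))"
    unfolding cell_energy_def by (rule integral_product_swap[OF m, symmetric])
  also have "(\<lambda>(x,y). real_pair_energy (y,x)) = real_pair_energy"
    by (rule ext) (auto simp: real_pair_energy_symmetric)
  finally show ?thesis by (simp add: cell_energy_def)
qed

lemma AE_cell_pair_W_finite:
  assumes k: "k \<in> occupied" and l: "l \<in> occupied"
  shows "AE z in cell_law k \<Otimes>\<^sub>M cell_law l. W (fst z) (snd z) \<noteq> \<infinity>"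
proof -
  have "(\<lambda>z. ennreal (cell_pair_density k l z)) \<in> borel_measurable (\<mu> \<Otimes>\<^sub>M \<mu>)"
    using cell_pair_density_measurable[OF k l] by measurable
  then show ?thesis
    unfolding cell_law_pair[OF k l] using AE_W_finite[OF finite_energy]
    by (subst AE_density) (auto elim: eventually_mono)
qed

lemma integrable_cell_V: "k \<in> occupied \<Longrightarrow> integrable (cell_law k) V"
proof -
  assume k: "k \<in> occupied"
  interpret prob_space "cell_law k" using prob_space_cell_law[OF k] .
  show ?thesis
  proof (rule integrable_const_bound[where B=V_bound])
    show "AE x in cell_law k. norm (V x) \<le> V_bound"
      using AE_cell_law[OF k] by eventually_elim (use C_sub[OF occupied_less[OF k]] abs_V_le_V_bound in auto)
  qed simp
qed

lemma abs_cell_V_le: "k \<in> occupied \<Longrightarrow> \<bar>cell_V k\<bar> \<le> V_bound"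
proof -
  assume k: "k \<in> occupied"
  interpret prob_space "cell_law k" using prob_space_cell_law[OF k] .
  have "norm (integral\<^sup>L (cell_law k) V) \<le> integral\<^sup>L (cell_law k) (\<lambda>x. norm (V x))"
    by (rule integral_norm_bound)
  also have "\<dots> \<le> integral\<^sup>L (cell_law k) (\<lambda>x. V_bound)"
    using AE_cell_law[OF k] integrable_cell_V[OF k] C_sub[OF occupied_less[OF k]]
    by (intro integral_mono_AE) (auto elim!: eventually_mono intro!: abs_V_le_V_bound)
  also have "\<dots> = V_bound" using prob_space by simp
  finally show ?thesis by (simp add: cell_V_def)
qed

text \<open>
  The occupied cells carry all of \<open>\<mu>\<close>, so
  \<open>\<mu> \<Otimes> \<mu> = \<Sum>\<^sub>k\<^sub>,\<^sub>l mass k mass l (cell_law k \<Otimes> cell_law l)\<close>.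
\<close>
lemma sum_cell_energy_eq_integral:
  "(\<Sum>k\<in>occupied. \<Sum>l\<in>occupied. mass k * mass l * cell_energy k l)
    = integral\<^sup>L (\<mu> \<Otimes>\<^sub>M \<mu>) real_pair_energy"
proof -
  define f where "f k l z = indicator (C k) (fst z) * indicator (C l) (snd z) * real_pair_energy z" for k l z
  have f_eq: "f k l = (\<lambda>z. (mass k * mass l) * (cell_pair_density k l z * real_pair_energy z))"
    if "k \<in> occupied" "l \<in> occupied" for k l
    using mass_pos[OF that(1)] mass_pos[OF that(2)] by (auto simp: f_def cell_pair_density_def)
  have f_int: "integrable (\<mu> \<Otimes>\<^sub>M \<mu>) (f k l)" if "k \<in> occupied" "l \<in> occupied" for k l
    unfolding f_eq[OF that] using integrable_cell_pair_density_energy[OF that] by simp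
  have "(\<Sum>k\<in>occupied. \<Sum>l\<in>occupied. mass k * mass l * cell_energy k l)
      = (\<Sum>k\<in>occupied. \<Sum>l\<in>occupied. integral\<^sup>L (\<mu> \<Otimes>\<^sub>M \<mu>) (f k l))"
    by (intro sum.cong refl) (simp add: f_eq cell_energy_eq_integral)
  also have "\<dots> = integral\<^sup>L (\<mu> \<Otimes>\<^sub>M \<mu>) (\<lambda>z. \<Sum>k\<in>occupied. \<Sum>l\<in>occupied. f k l z)"
    using f_int by (simp add: Bochner_Integration.integral_sum Bochner_Integration.integrable_sum)
  also have "\<dots> = integral\<^sup>L (\<mu> \<Otimes>\<^sub>M \<mu>) real_pair_energy"
  proof (rule integral_cong_AE)
    show "AE z in \<mu> \<Otimes>\<^sub>M \<mu>. (\<Sum>k\<in>occupied. \<Sum>l\<in>occupied. f k l z) = real_pair_energy z"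
      using AE_mu_pair[OF occupied_union_measurable AE_mu_occupied_union]
      by eventually_elim (simp add: f_def sum_product[symmetric] sum_distrib_right[symmetric]
          sum_indicator_occupied)
  qed (use f_int in \<open>auto intro: borel_measurable_sum\<close>)
  finally show ?thesis .
qed

definition mean_energy :: "nat \<Rightarrow> (nat \<Rightarrow> nat) \<Rightarrow> real" where
  "mean_energy N c = ((\<Sum>i<N. \<Sum>j\<in>{i<..<N}. cell_energy (c i) (c j)) + (\<Sum>i<N. cell_V (c i))) / (real N)\<^sup>2"

context
  fixes N :: nat and c :: "nat \<Rightarrow> nat"
  assumes c: "\<And>i. c i \<in> occupied"
begin

abbreviation config_law :: "(nat \<Rightarrow> 'a) measure" where
  "config_law \<equiv> PiM {..<N} (\<lambda>i. cell_law (c i))"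

text \<open>
  Where \<open>W\<close> is finite this is \<open>H\<^sub>N\<close>: the pair sum counts each \<open>V (x i)\<close> exactly \<open>N - 1\<close> times.
\<close>
definition config_energy :: "(nat \<Rightarrow> 'a) \<Rightarrow> real" where
  "config_energy x = ((\<Sum>i<N. \<Sum>j\<in>{i<..<N}. real_pair_energy (x i, x j)) + (\<Sum>i<N. V (x i))) / (real N)\<^sup>2"

lemma prob_space_config_law: "prob_space config_law"
  by (intro prob_space_PiM prob_space_cell_law c)

lemma config_pair_energy:
  assumes ij: "i < N" "j < N" "i \<noteq> j"
  shows "integrable config_law (\<lambda>x. real_pair_energy (x i, x j))"
    and "integral\<^sup>L config_law (\<lambda>x. real_pair_energy (x i, x j)) = cell_energy (c i) (c j)"
    and "AE x in config_law. W (x i) (x j) \<noteq> \<infinity>"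
proof -
  have m: "(\<lambda>x. (x i, x j)) \<in> config_law \<rightarrow>\<^sub>M cell_law (c i) \<Otimes>\<^sub>M cell_law (c j)"
    using ij by (intro measurable_Pair) auto
  have d: "distr config_law (cell_law (c i) \<Otimes>\<^sub>M cell_law (c j)) (\<lambda>x. (x i, x j))
      = cell_law (c i) \<Otimes>\<^sub>M cell_law (c j)"
    using ij by (intro distr_PiM_pair) (auto intro: prob_space_cell_law c)
  have E: "real_pair_energy \<in> borel_measurable (cell_law (c i) \<Otimes>\<^sub>M cell_law (c j))"
    by (rule real_pair_energy_measurable) (simp_all add: sets_cell_law)
  show "integrable config_law (\<lambda>x. real_pair_energy (x i, x j))"
    using integrable_distr_eq[OF m E] d integrable_cell_pair_energy[OF c c] by simp
  show "integral\<^sup>L config_law (\<lambda>x. real_pair_energy (x i, x j)) = cell_energy (c i) (c j)"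
    using integral_distr[OF m E] d by (simp add: cell_energy_def)
  have "AE z in distr config_law (cell_law (c i) \<Otimes>\<^sub>M cell_law (c j)) (\<lambda>x. (x i, x j)).
      W (fst z) (snd z) \<noteq> \<infinity>"
    unfolding d by (rule AE_cell_pair_W_finite[OF c c])
  from AE_distrD[OF m this] show "AE x in config_law. W (x i) (x j) \<noteq> \<infinity>" by simp
qed

lemma config_V:
  assumes i: "i < N"
  shows "integrable config_law (\<lambda>x. V (x i))" "integral\<^sup>L config_law (\<lambda>x. V (x i)) = cell_V (c i)"
proof -
  have m: "(\<lambda>x. x i) \<in> config_law \<rightarrow>\<^sub>M cell_law (c i)" using i by simp
  have Vm: "V \<in> borel_measurable (cell_law (c i))"
    by (simp add: measurable_cong_sets[OF sets_cell_law refl])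
  have d: "distr config_law (cell_law (c i)) (\<lambda>x. x i) = cell_law (c i)"
    using i by (intro distr_PiM_component) (auto intro: prob_space_cell_law c)
  show "integrable config_law (\<lambda>x. V (x i))"
    using integrable_distr_eq[OF m Vm] d integrable_cell_V[OF c] by simp
  show "integral\<^sup>L config_law (\<lambda>x. V (x i)) = cell_V (c i)"
    using integral_distr[OF m Vm] d by (simp add: cell_V_def)
qed

lemma integrable_config_energy: "integrable config_law config_energy"
  and integral_config_energy: "integral\<^sup>L config_law config_energy = mean_energy N c"
proof -
  have pairs: "integrable config_law (\<lambda>x. \<Sum>i<N. \<Sum>j\<in>{i<..<N}. real_pair_energy (x i, x j))"
    using config_pair_energy(1) by (intro Bochner_Integration.integrable_sum) auto
  have singles: "integrable config_law (\<lambda>x. \<Sum>i<N. V (x i))"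
    using config_V(1) by (intro Bochner_Integration.integrable_sum) auto
  show "integrable config_law config_energy"
    unfolding config_energy_def[abs_def] using pairs singles
    by (intro integrable_divide_zero Bochner_Integration.integrable_add)
  have "integral\<^sup>L config_law (\<lambda>x. \<Sum>i<N. \<Sum>j\<in>{i<..<N}. real_pair_energy (x i, x j))
      = (\<Sum>i<N. \<Sum>j\<in>{i<..<N}. cell_energy (c i) (c j))"
  proof -
    have "integral\<^sup>L config_law (\<lambda>x. \<Sum>i<N. \<Sum>j\<in>{i<..<N}. real_pair_energy (x i, x j))
        = (\<Sum>i<N. integral\<^sup>L config_law (\<lambda>x. \<Sum>j\<in>{i<..<N}. real_pair_energy (x i, x j)))"
      using config_pair_energy(1)
      by (intro Bochner_Integration.integral_sum Bochner_Integration.integrable_sum) auto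
    also have "\<dots> = (\<Sum>i<N. \<Sum>j\<in>{i<..<N}. integral\<^sup>L config_law (\<lambda>x. real_pair_energy (x i, x j)))"
      using config_pair_energy(1) by (intro sum.cong refl Bochner_Integration.integral_sum) auto
    finally show ?thesis using config_pair_energy(2) by simp
  qed
  moreover have "integral\<^sup>L config_law (\<lambda>x. \<Sum>i<N. V (x i)) = (\<Sum>i<N. cell_V (c i))"
    using config_V by (simp add: Bochner_Integration.integral_sum)
  ultimately show "integral\<^sup>L config_law config_energy = mean_energy N c"
    unfolding config_energy_def[abs_def] mean_energy_def using pairs singles by simp
qed

lemma AE_HN_eq_config_energy:
  assumes N: "N > 0"
  shows "AE x in config_law. HN V W N x = ereal (config_energy x)"
proof -
  have "AE x in config_law. \<forall>i\<in>{..<N}. \<forall>j\<in>{i<..<N}. W (x i) (x j) \<noteq> \<infinity>"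
    using config_pair_energy(3) by (subst AE_finite_all, simp, intro ballI, subst AE_finite_all, simp, auto)
  then show ?thesis
  proof eventually_elim
    case (elim x)
    define Wr where "Wr i j = real_of_ereal (W (x i) (x j))" for i j
    have "W (x i) (x j) = ereal (Wr i j)" if "i < N" "j \<in> {i<..<N}" for i j
      using elim that W_neq_minf[of "x i" "x j"] unfolding Wr_def by (cases "W (x i) (x j)") auto
    then have "(\<Sum>i<N. \<Sum>j\<in>{i<..<N}. W (x i) (x j)) = (\<Sum>i<N. \<Sum>j\<in>{i<..<N}. ereal (Wr i j))"
      by (intro sum.cong refl) auto
    also have "\<dots> = ereal (\<Sum>i<N. \<Sum>j\<in>{i<..<N}. Wr i j)" by (simp only: sum_ereal)
    finally have "HN V W N x = ereal ((\<Sum>i<N. V (x i)) / real N + (\<Sum>i<N. \<Sum>j\<in>{i<..<N}. Wr i j) / (real N)\<^sup>2)"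
      unfolding HN_def using N by simp
    also have "(\<Sum>i<N. V (x i)) / real N + (\<Sum>i<N. \<Sum>j\<in>{i<..<N}. Wr i j) / (real N)\<^sup>2 = config_energy x"
    proof -
      have "(\<Sum>i<N. \<Sum>j\<in>{i<..<N}. real_pair_energy (x i, x j))
          = (\<Sum>i<N. \<Sum>j\<in>{i<..<N}. V (x i) + V (x j)) + (\<Sum>i<N. \<Sum>j\<in>{i<..<N}. Wr i j)"
        by (simp add: real_pair_energy_def Wr_def sum.distrib)
      also have "\<dots> = (real N - 1) * (\<Sum>i<N. V (x i)) + (\<Sum>i<N. \<Sum>j\<in>{i<..<N}. Wr i j)"
        by (simp add: sum_upper_pairs_add)
      finally show ?thesis unfolding config_energy_def using N by (simp add: field_simps power2_eq_square)
    qed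
    finally show ?case .
  qed
qed

lemma ZQ_ge_exp_mean_energy:
  assumes N: "N > 0" and in_B: "\<And>x. (\<forall>i<N. x i \<in> C (c i)) \<Longrightarrow> empirical N x \<in> B"
  shows "ennreal (exp (- \<beta> N * mean_energy N c)) \<le> ennreal (max_cell_density ^ N) * ZQ \<beta> V W N B"
proof -
  define G where "G x = boltz (\<beta> N) (HN V W N x)" for x
  have G: "G \<in> borel_measurable (PiM {..<N} (\<lambda>i. (lborel::'a measure)))"
    unfolding G_def using HN_measurable[of N "\<lambda>i. lborel"] by measurable
  have "ennreal (exp (- \<beta> N * mean_energy N c))
      \<le> (\<integral>\<^sup>+ x. ennreal (exp (- \<beta> N * config_energy x)) \<partial>config_law)"
    using exp_integral_le_nn_integral_exp[OF prob_space_config_law integrable_config_energy]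
    by (simp add: integral_config_energy)
  also have "\<dots> = (\<integral>\<^sup>+ x. G x \<partial>config_law)"
    using AE_HN_eq_config_energy[OF N]
    by (intro nn_integral_cong_AE) (auto elim!: eventually_mono simp: G_def boltz_def)
  also have "\<dots> \<le> ennreal (max_cell_density ^ N) *
      (\<integral>\<^sup>+ x. indicator {x. \<forall>i<N. x i \<in> C (c i)} x * G x \<partial>PiM {..<N} (\<lambda>i. lborel))"
    by (rule nn_integral_cell_laws_le[OF c G])
  also have "\<dots> \<le> ennreal (max_cell_density ^ N) * ZQ \<beta> V W N B"
    unfolding ZQ_def
  proof (intro mult_left_mono nn_integral_mono)
    fix x
    show "indicator {x. \<forall>i<N. x i \<in> C (c i)} x * G x
        \<le> indicator {x. empirical N x \<in> B} x * boltz (\<beta> N) (HN V W N x)"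
      using in_B[of x] by (auto simp: G_def indicator_def)
  qed simp
  finally show ?thesis .
qed

end

lemma mean_energy_approx:
  assumes c: "\<And>i. c i \<in> occupied" and N: "N > 0"
  shows "\<bar>mean_energy N c - (\<Sum>k\<in>occupied. \<Sum>l\<in>occupied. freq N c k * freq N c l * cell_energy k l) / 2\<bar>
         \<le> ((\<Sum>k\<in>occupied. \<bar>cell_energy k k\<bar>) / 2 + V_bound) / real N"
proof -
  define n where "n k = real (card {i. i < N \<and> c i = k})" for k
  have two: "2 * (\<Sum>i<N. \<Sum>j\<in>{i<..<N}. cell_energy (c i) (c j))
      = (\<Sum>i<N. \<Sum>j<N. cell_energy (c i) (c j)) - (\<Sum>i<N. cell_energy (c i) (c i))"
    by (rule sum_upper_pairs_symmetric) (simp add: cell_energy_symmetric c)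
  have full: "(\<Sum>i<N. \<Sum>j<N. cell_energy (c i) (c j)) = (\<Sum>k\<in>occupied. \<Sum>l\<in>occupied. n k * n l * cell_energy k l)"
  proof -
    have "(\<Sum>i<N. \<Sum>j<N. cell_energy (c i) (c j)) = (\<Sum>i<N. \<Sum>l\<in>occupied. n l * cell_energy (c i) l)"
    proof (rule sum.cong[OF refl])
      fix i
      show "(\<Sum>j<N. cell_energy (c i) (c j)) = (\<Sum>l\<in>occupied. n l * cell_energy (c i) l)"
        using sum_by_label[OF finite_occupied c, where N=N and F="\<lambda>l. cell_energy (c i) l"]
        by (simp add: n_def)
    qed
    also have "\<dots> = (\<Sum>l\<in>occupied. \<Sum>i<N. n l * cell_energy (c i) l)" by (rule sum.swap)
    also have "\<dots> = (\<Sum>l\<in>occupied. \<Sum>k\<in>occupied. n k * (n l * cell_energy k l))"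
    proof (rule sum.cong[OF refl])
      fix l
      show "(\<Sum>i<N. n l * cell_energy (c i) l) = (\<Sum>k\<in>occupied. n k * (n l * cell_energy k l))"
        using sum_by_label[OF finite_occupied c, where N=N and F="\<lambda>k. n l * cell_energy k l"]
        by (simp add: n_def)
    qed
    also have "\<dots> = (\<Sum>k\<in>occupied. \<Sum>l\<in>occupied. n k * n l * cell_energy k l)"
      by (subst sum.swap) (simp add: mult.assoc)
    finally show ?thesis .
  qed
  have diag: "\<bar>\<Sum>i<N. cell_energy (c i) (c i)\<bar> \<le> real N * (\<Sum>k\<in>occupied. \<bar>cell_energy k k\<bar>)"
  proof -
    have "\<bar>\<Sum>i<N. cell_energy (c i) (c i)\<bar> \<le> (\<Sum>i<N. \<bar>cell_energy (c i) (c i)\<bar>)" by (rule sum_abs)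
    also have "\<dots> \<le> (\<Sum>i<N. (\<Sum>k\<in>occupied. \<bar>cell_energy k k\<bar>))"
      using c finite_occupied by (intro sum_mono member_le_sum[where f="\<lambda>k. \<bar>cell_energy k k\<bar>"]) auto
    finally show ?thesis by simp
  qed
  have V_sum: "\<bar>\<Sum>i<N. cell_V (c i)\<bar> \<le> real N * V_bound"
  proof -
    have "\<bar>\<Sum>i<N. cell_V (c i)\<bar> \<le> (\<Sum>i<N. \<bar>cell_V (c i)\<bar>)" by (rule sum_abs)
    also have "\<dots> \<le> (\<Sum>i<N. V_bound)" using abs_cell_V_le c by (intro sum_mono) auto
    finally show ?thesis by simp
  qed
  have "mean_energy N c - (\<Sum>k\<in>occupied. \<Sum>l\<in>occupied. freq N c k * freq N c l * cell_energy k l) / 2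
      = ((\<Sum>i<N. cell_V (c i)) - (\<Sum>i<N. cell_energy (c i) (c i)) / 2) / (real N)\<^sup>2"
  proof -
    have "(\<Sum>k\<in>occupied. \<Sum>l\<in>occupied. freq N c k * freq N c l * cell_energy k l)
        = (\<Sum>k\<in>occupied. \<Sum>l\<in>occupied. n k * n l * cell_energy k l) / (real N)\<^sup>2"
      by (simp add: freq_def n_def sum_divide_distrib power2_eq_square)
    then show ?thesis
      unfolding mean_energy_def using two full N by (simp add: field_simps)
  qed
  also have "\<bar>\<dots>\<bar> \<le> (real N * V_bound + real N * (\<Sum>k\<in>occupied. \<bar>cell_energy k k\<bar>) / 2) / (real N)\<^sup>2"
  proof -
    have "\<bar>(\<Sum>i<N. cell_V (c i)) - (\<Sum>i<N. cell_energy (c i) (c i)) / 2\<bar>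
        \<le> real N * V_bound + real N * (\<Sum>k\<in>occupied. \<bar>cell_energy k k\<bar>) / 2"
      using diag V_sum unfolding abs_le_iff by linarith
    then show ?thesis by (simp add: abs_divide divide_right_mono)
  qed
  also have "\<dots> = ((\<Sum>k\<in>occupied. \<bar>cell_energy k k\<bar>) / 2 + V_bound) / real N"
    using N by (simp add: field_simps power2_eq_square)
  finally show ?thesis .
qed

text \<open>The diagonal terms \<open>i = j\<close>, missing from \<open>mean_energy\<close>, only contribute \<open>O(1/N)\<close>.\<close>
lemma mean_energy_tendsto:
  fixes c :: "nat \<Rightarrow> nat \<Rightarrow> nat"
  assumes c: "\<And>N i. c N i \<in> occupied"
    and freq: "\<And>k. k \<in> occupied \<Longrightarrow> ((\<lambda>N. freq N (c N) k) \<longlongrightarrow> mass k) sequentially"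
  shows "((\<lambda>N. mean_energy N (c N)) \<longlongrightarrow> integral\<^sup>L (\<mu> \<Otimes>\<^sub>M \<mu>) real_pair_energy / 2) sequentially"
proof -
  define A where "A N = (\<Sum>k\<in>occupied. \<Sum>l\<in>occupied. freq N (c N) k * freq N (c N) l * cell_energy k l) / 2" for N
  have "(A \<longlongrightarrow> (\<Sum>k\<in>occupied. \<Sum>l\<in>occupied. mass k * mass l * cell_energy k l) / 2) sequentially"
    unfolding A_def using freq by (intro tendsto_intros) auto
  then have A: "(A \<longlongrightarrow> integral\<^sup>L (\<mu> \<Otimes>\<^sub>M \<mu>) real_pair_energy / 2) sequentially"
    by (simp add: sum_cell_energy_eq_integral)
  have "((\<lambda>N. mean_energy N (c N) - A N) \<longlongrightarrow> 0) sequentially"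
  proof (rule Lim_null_comparison)
    show "\<forall>\<^sub>F N in sequentially. norm (mean_energy N (c N) - A N)
        \<le> ((\<Sum>k\<in>occupied. \<bar>cell_energy k k\<bar>) / 2 + V_bound) / real N"
      using eventually_gt_at_top[of 0]
      by eventually_elim (use mean_energy_approx c in \<open>simp add: A_def\<close>)
    show "((\<lambda>N. ((\<Sum>k\<in>occupied. \<bar>cell_energy k k\<bar>) / 2 + V_bound) / real N) \<longlongrightarrow> 0) sequentially"
      by (intro tendsto_divide_0[OF tendsto_const] filterlim_at_top_imp_at_infinity filterlim_real_sequentially)
  qed
  from tendsto_add[OF this A] show ?thesis by simp
qed

lemma eventually_dFM_empirical_less:
  fixes c :: "nat \<Rightarrow> nat \<Rightarrow> nat"
  assumes c: "\<And>N i. c N i \<in> occupied"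
    and freq: "\<And>k. k \<in> occupied \<Longrightarrow> ((\<lambda>N. freq N (c N) k) \<longlongrightarrow> mass k) sequentially"
    and r: "2 * e < r"
  shows "\<forall>\<^sub>F N in sequentially. \<forall>x. (\<forall>i<N. x i \<in> C (c N i)) \<longrightarrow> dFM \<mu> (empirical N x) < r"
proof -
  have "((\<lambda>N. \<Sum>k\<in>occupied. \<bar>mass k - freq N (c N) k\<bar>) \<longlongrightarrow> (\<Sum>k\<in>occupied. \<bar>mass k - mass k\<bar>)) sequentially"
    using freq by (intro tendsto_intros) auto
  then have "\<forall>\<^sub>F N in sequentially. (\<Sum>k\<in>occupied. \<bar>mass k - freq N (c N) k\<bar>) < r - 2 * e"
    using r by (intro order_tendstoD(2)) auto
  then show ?thesis using eventually_gt_at_top[of 0]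
  proof eventually_elim
    case (elim N)
    show ?case
    proof (intro allI impI)
      fix x assume "\<forall>i<N. x i \<in> C (c N i)"
      from dFM_empirical_le[OF c[of N] elim(2) this] show "dFM \<mu> (empirical N x) < r"
        using elim(1) by linarith
    qed
  qed
qed

lemma log_ZQ_ge:
  assumes c: "\<And>i. c i \<in> occupied" and N: "N > 0" and \<beta>: "\<beta> N > 0"
    and in_B: "\<And>x. (\<forall>i<N. x i \<in> C (c i)) \<Longrightarrow> empirical N x \<in> B"
  shows "ereal (- mean_energy N c - ln max_cell_density * (real N / \<beta> N)) \<le> eln (ZQ \<beta> V W N B) / ereal (\<beta> N)"
proof -
  have "ereal (ln (exp (- \<beta> N * mean_energy N c)) - ln (max_cell_density ^ N)) \<le> eln (ZQ \<beta> V W N B)"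
    using ZQ_ge_exp_mean_energy[OF c N in_B] max_cell_density_pos by (intro eln_ge_ln_diff) auto
  then have "ereal (- \<beta> N * mean_energy N c - real N * ln max_cell_density) \<le> eln (ZQ \<beta> V W N B)"
    using max_cell_density_pos by (simp add: ln_realpow)
  from ereal_divide_pos_mono[OF this \<beta>] show ?thesis
    using \<beta> by (simp add: field_simps)
qed

lemma liminf_log_ZQ_ge:
  fixes \<beta> :: "nat \<Rightarrow> real"
  assumes \<beta>: "\<And>N. \<beta> N > 0" and N_over_\<beta>: "((\<lambda>N. real N / \<beta> N) \<longlongrightarrow> 0) sequentially"
    and r: "2 * e < r"
  shows "liminf (\<lambda>N. eln (ZQ \<beta> V W N {\<nu>. dFM \<mu> \<nu> < r}) / ereal (\<beta> N)) \<ge> - Irate V W \<mu>"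
proof -
  obtain k0 where "k0 \<in> occupied" using occupied_nonempty by auto
  then obtain c where c: "\<And>N i. c N i \<in> occupied"
    and freq: "\<And>k. k \<in> occupied \<Longrightarrow> ((\<lambda>N. freq N (c N) k) \<longlongrightarrow> mass k) sequentially"
    using assignments_with_frequencies[OF finite_occupied, of k0 mass] mass_nonneg sum_mass by blast
  define lower where "lower N = - mean_energy N (c N) - ln max_cell_density * (real N / \<beta> N)" for N
  have "(lower \<longlongrightarrow> - (integral\<^sup>L (\<mu> \<Otimes>\<^sub>M \<mu>) real_pair_energy / 2) - ln max_cell_density * 0) sequentially"
    unfolding lower_def by (intro tendsto_intros mean_energy_tendsto[OF c freq] N_over_\<beta>)
  then have lim: "liminf (\<lambda>N. ereal (lower N)) = - Irate V W \<mu>"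
    by (intro lim_imp_Liminf) (auto simp: Irate_eq_integral[OF finite_energy] tendsto_ereal)
  have near: "\<forall>\<^sub>F N in sequentially. \<forall>x. (\<forall>i<N. x i \<in> C (c N i)) \<longrightarrow> dFM \<mu> (empirical N x) < r"
    using c freq r by (rule eventually_dFM_empirical_less)
  have "\<forall>\<^sub>F N in sequentially. ereal (lower N) \<le> eln (ZQ \<beta> V W N {\<nu>. dFM \<mu> \<nu> < r}) / ereal (\<beta> N)"
    using near eventually_gt_at_top[of "0::nat"]
  proof eventually_elim
    case (elim N)
    then show ?case unfolding lower_def by (intro log_ZQ_ge[OF c[of N] elim(2) \<beta>]) auto
  qed
  from Liminf_mono[OF this] show ?thesis by (simp add: lim)
qed

end

theorem proposition2p5:
  fixes V :: "'a::euclidean_space \<Rightarrow> real"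
    and W :: "'a \<Rightarrow> 'a \<Rightarrow> ereal"
    and \<beta> :: "nat \<Rightarrow> real"
    and \<mu> :: "'a measure"
    and h :: "'a \<Rightarrow> real"
    and a b :: 'a
    and \<delta> r :: real
  assumes H1_cont: "continuous_on UNIV (\<lambda>(x, y). W x y)"
    and H1_sym: "\<And>x y. W x y = W y x"
    and H1_notMInf: "\<And>x y. W x y \<noteq> - \<infinity>"
    and H1_finite: "\<And>x y. x \<noteq> y \<Longrightarrow> W x y \<noteq> \<infinity>"
    and H1_int: "\<And>K C. compact K \<Longrightarrow> compact C \<Longrightarrow>
                   (\<integral>\<^sup>+ z \<in> C. e2ennreal (Wsup W K z) \<partial>lborel) < \<infinity>"
    and H2_cont: "continuous_on UNIV V"
    and H2_coercive: "filterlim V at_top at_infinity"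
    and H2_int: "(\<integral>\<^sup>+ x. ennreal (exp (- V x)) \<partial>lborel) < \<infinity>"
    and H3: "\<exists>c \<epsilon>o. 0 < \<epsilon>o \<and> \<epsilon>o < 1 \<and>
               (\<forall>x y. W x y \<ge> ereal (c - \<epsilon>o * (V x + V y)))"
    and beta_pos: "\<And>N. \<beta> N > 0"
    and beta_growth: "filterlim (\<lambda>N. \<beta> N / (real N * ln (real N))) at_top sequentially"
    and h_meas: "h \<in> borel_measurable lborel"
    and mu_def: "\<mu> = density lborel (\<lambda>x. ennreal (h x))"
    and mu_prob: "prob_space \<mu>"
    and h_supp: "\<And>x. x \<notin> cbox a b \<Longrightarrow> h x = 0"
    and delta_pos: "\<delta> > 0"
    and h_bounds: "\<And>x. x \<in> cbox a b \<Longrightarrow> \<delta> \<le> h x \<and> h x \<le> 1 / \<delta>"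
    and r_pos: "r > 0"
  shows "liminf (\<lambda>N. eln (ZQ \<beta> V W N {\<nu>. dFM \<mu> \<nu> < r}) / ereal (\<beta> N)) \<ge> - Irate V W \<mu>"
proof -
  interpret box_density V W h \<mu> a b \<delta>
    by (rule box_density.intro[OF H1_cont H1_sym H2_cont H3 h_meas mu_def mu_prob h_supp delta_pos h_bounds])
  show ?thesis
  proof (cases "(\<integral>\<^sup>+ z. e2ennreal (pair_energy z) \<partial>(\<mu> \<Otimes>\<^sub>M \<mu>)) = \<infinity>")
    case True
    then show ?thesis by (simp add: Irate_eq_infinity)
  next
    case False
    have r4: "r / 4 > 0" using r_pos by simp
    obtain M :: nat and C where "\<And>k. k < M \<Longrightarrow> C k \<subseteq> cbox a b" "\<And>k. k < M \<Longrightarrow> C k \<in> sets borel"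
      "\<And>k x y. k < M \<Longrightarrow> x \<in> C k \<Longrightarrow> y \<in> C k \<Longrightarrow> dist x y \<le> r / 4"
      "disjoint_family_on C {..<M}" "(\<Union>k<M. C k) = cbox a b"
      using compact_partition_small_diameter[OF compact_cbox r4] by blast
    then interpret finite_energy_partition V W h \<mu> a b \<delta> M C "r / 4"
      using False by unfold_locales auto
    show ?thesis
      using liminf_log_ZQ_ge[OF beta_pos nat_over_beta_tendsto_0[OF beta_pos beta_growth]] r_pos by simp
  qed
qed

end
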